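(* There exist numerical constants $c_1,c_2,c_3>0$ such that, in the Gaussian $G$-latent setting below with $m\ge2$ and $\log(p)\le c_1n$, with probability at least $1-c_3/p$ the estimator $\check\Gamma$ defined below satisfies $$|\check\Gamma-\Gamma|_V\le2|\check\Gamma-\Gamma|_\infty\le c_2|\Gamma|_\infty^{1/2}|\Sigma|_\infty^{1/2}\sqrt{\frac{\log p}{n}}.$$
   Context: Setting: $G=\{G_1,\dots,G_K\}$ partition of $[p]$ into nonempty groups, $k(a)$ the index with $a\in G_{k(a)}$, $m=\min_k|G_k|$. $X_a=Z_{k(a)}+E_a$ with $Z\sim N(0,C)$ in $\mathbb{R}^K$ and $E\sim N(0,\Gamma)$ in $\mathbb{R}^p$ independent, $\Gamma$ diagonal with $\Gamma_{aa}=\gamma_{k(a)}>0$; $\Sigma=ACA^t+\Gamma$, $A_{ak}=1_{\{a\in G_k\}}$. Data: $n$ i.i.d. copies of $X$ as rows of the $n\times p$ matrix $\mathbf{X}$, columns $\mathbf{X}_{:a}$. Estimator: $ne(a)\in\arg\min_{b\in[p]\setminus\{a\}}\max_{c\neq a,b}\big|\langle\mathbf{X}_{:a}-\mathbf{X}_{:b},\mathbf{X}_{:c}/|\mathbf{X}_{:c}|_2\rangle\big|$ and $\check\Gamma$ is diagonal with $\check\Gamma_{aa}=\frac1n\langle\mathbf{X}_{:a}-\mathbf{X}_{:ne(a)},\mathbf{X}_{:a}\rangle$. For diagonal $D$, $|D|_V=\max_aD_{aa}-\min_aD_{aa}$; $|M|_\infty$ is the largest absolute entry. *)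

theory Defs
  imports "HOL-Probability.Probability"
begin

definition std_gaussian :: "real measure" where
  "std_gaussian = density lborel (\<lambda>x. ennreal (std_normal_density x))"

text \<open>N(0,1) coordinates W(i,j), i < n (sample index),
  j < K + p; coordinates j < K drive the latent vector Z of sample i, coordinate K + a drives
  the noise E_a of sample i.\<close>
definition data_space :: "nat \<Rightarrow> nat \<Rightarrow> nat \<Rightarrow> (nat \<times> nat \<Rightarrow> real) measure" where
  "data_space n K p = PiM ({..<n} \<times> {..<K + p}) (\<lambda>_. std_gaussian)"

text \<open>Data matrix entry X i a (row i, column a): X_a = Z_{k(a)} + E_a with Z = L W (so
  Z ~ N(0, L L^t)) and E_a = sqrt(gamma_{k(a)}) V_a.\<close>
definition Xdat :: "(nat \<Rightarrow> nat \<Rightarrow> real) \<Rightarrow> (nat \<Rightarrow> nat) \<Rightarrow> (nat \<Rightarrow> real) \<Rightarrow> nat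
    \<Rightarrow> (nat \<times> nat \<Rightarrow> real) \<Rightarrow> nat \<Rightarrow> nat \<Rightarrow> real" where
  "Xdat L grp \<gamma> K \<omega> i a =
     (\<Sum>j<K. L (grp a) j * \<omega> (i, j)) + sqrt (\<gamma> (grp a)) * \<omega> (i, K + a)"

definition col_norm :: "nat \<Rightarrow> (nat \<Rightarrow> nat \<Rightarrow> real) \<Rightarrow> nat \<Rightarrow> real" where
  "col_norm n X c = sqrt (\<Sum>i<n. (X i c)\<^sup>2)"

text \<open>Criterion max_{c \<noteq> a,b} |<X_a - X_b, X_c/|X_c|_2>| (the max over the empty set,
  occurring only when p = 2, is taken to be 0; this does not affect the argmin).\<close>
definition ne_crit :: "nat \<Rightarrow> nat \<Rightarrow> (nat \<Rightarrow> nat \<Rightarrow> real) \<Rightarrow> nat \<Rightarrow> nat \<Rightarrow> real" where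
  "ne_crit n p X a b = Max (insert 0
     ((\<lambda>c. \<bar>(\<Sum>i<n. (X i a - X i b) * X i c) / col_norm n X c\<bar>) ` {c. c < p \<and> c \<noteq> a \<and> c \<noteq> b}))"

definition is_ne :: "nat \<Rightarrow> nat \<Rightarrow> (nat \<Rightarrow> nat \<Rightarrow> real) \<Rightarrow> (nat \<Rightarrow> nat) \<Rightarrow> bool" where
  "is_ne n p X ne \<longleftrightarrow> (\<forall>a<p. ne a < p \<and> ne a \<noteq> a \<and>
      (\<forall>b<p. b \<noteq> a \<longrightarrow> ne_crit n p X a (ne a) \<le> ne_crit n p X a b))"

definition Gamma_check :: "nat \<Rightarrow> (nat \<Rightarrow> nat \<Rightarrow> real) \<Rightarrow> (nat \<Rightarrow> nat) \<Rightarrow> nat \<Rightarrow> real" where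
  "Gamma_check n X ne a = (1 / real n) * (\<Sum>i<n. (X i a - X i (ne a)) * X i a)"

definition diag_V :: "nat \<Rightarrow> (nat \<Rightarrow> real) \<Rightarrow> real" where
  "diag_V p d = Max (d ` {..<p}) - Min (d ` {..<p})"

definition mat_sup :: "nat \<Rightarrow> (nat \<Rightarrow> nat \<Rightarrow> real) \<Rightarrow> real" where
  "mat_sup p M = Max ((\<lambda>(a, b). \<bar>M a b\<bar>) ` ({..<p} \<times> {..<p}))"

text \<open>Sigma = A C A^t + Gamma.\<close>
definition Sigma_mat :: "(nat \<Rightarrow> nat) \<Rightarrow> (nat \<Rightarrow> nat \<Rightarrow> real) \<Rightarrow> (nat \<Rightarrow> real) \<Rightarrow> nat \<Rightarrow> nat \<Rightarrow> real" where
  "Sigma_mat grp C \<gamma> a b = C (grp a) (grp b) + (if a = b then \<gamma> (grp a) else 0)"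

end

theory Submission
  imports Defs
begin

text \<open>Fix a column a and a partner a' in the same group, which exists because every group has at
  least two members. Then X a - X a' is a multiple of the noise difference E a - E a', which is
  independent of every other column; Gaussian tail bounds make its normalised inner products with
  all columns X c at most of order sqrt (gamma log p), so the criterion of a' is small, and so is
  that of ne a, which minimises it. Hence n Gamma_check a differs from <X a - X a', X a> by at most
  that order times column norms, and expanding <X a - X a', X a> = gamma |E a|^2 + (latent and
  noise cross terms) together with chi-square bounds on |E a|^2 and on the column norms gives
  |Gamma_check a - gamma| = O(sqrt (|Gamma| |Sigma| log p / n)). Every deviation event has
  probability O(p^-3) and there are O(p^2) of them.\<close>

lemma prob_space_std_gaussian: "prob_space std_gaussian"
  using real_dist_normal_dist unfolding std_gaussian_def real_distribution_def by simp

lemma sets_std_gaussian [simp, measurable_cong]: "sets std_gaussian = sets borel"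
  unfolding std_gaussian_def by simp

lemma space_std_gaussian [simp]: "space std_gaussian = UNIV"
  unfolding std_gaussian_def by simp

lemma nn_integral_std_gaussian:
  assumes [measurable]: "f \<in> borel_measurable borel"
  shows "(\<integral>\<^sup>+x. f x \<partial>std_gaussian) = (\<integral>\<^sup>+x. ennreal (std_normal_density x) * f x \<partial>lborel)"
  unfolding std_gaussian_def by (subst nn_integral_density) auto

lemma nn_integral_normal_density: "0 < \<sigma> \<Longrightarrow> (\<integral>\<^sup>+x. ennreal (normal_density \<mu> \<sigma> x) \<partial>lborel) = 1"
  by (subst nn_integral_eq_integral) auto

lemma nn_integral_std_gaussian_exp_linear:
  "(\<integral>\<^sup>+x. ennreal (exp (\<theta> * x)) \<partial>std_gaussian) = ennreal (exp (\<theta>\<^sup>2 / 2))"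
proof -
  have "std_normal_density x * exp (\<theta> * x) = exp (\<theta>\<^sup>2 / 2) * normal_density \<theta> 1 x" for x
  proof -
    have "\<theta> * x + - x\<^sup>2 / 2 = \<theta>\<^sup>2 / 2 + - (x - \<theta>)\<^sup>2 / (2 * 1\<^sup>2)"
      by (simp add: power2_eq_square field_simps)
    then have "exp (\<theta> * x) * exp (- x\<^sup>2 / 2) = exp (\<theta>\<^sup>2 / 2) * exp (- (x - \<theta>)\<^sup>2 / (2 * 1\<^sup>2))"
      by (simp only: exp_add[symmetric])
    then show ?thesis
      unfolding std_normal_density_def normal_density_def by (simp add: mult.commute)
  qed
  then have "ennreal (std_normal_density x) * ennreal (exp (\<theta> * x)) =
      ennreal (exp (\<theta>\<^sup>2 / 2)) * ennreal (normal_density \<theta> 1 x)" for x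
    by (simp add: ennreal_mult[symmetric])
  then show ?thesis
    by (simp add: nn_integral_std_gaussian nn_integral_cmult nn_integral_normal_density)
qed

lemma nn_integral_std_gaussian_exp_square:
  assumes "\<mu> < 1/2"
  shows "(\<integral>\<^sup>+x. ennreal (exp (\<mu> * x\<^sup>2)) \<partial>std_gaussian) = ennreal (1 / sqrt (1 - 2 * \<mu>))"
proof -
  define s where "s = 1 / sqrt (1 - 2 * \<mu>)"
  have s0: "s > 0" using assms by (simp add: s_def)
  have s2: "s\<^sup>2 = 1 / (1 - 2 * \<mu>)" using assms by (simp add: s_def power_divide)
  have "std_normal_density x * exp (\<mu> * x\<^sup>2) = s * normal_density 0 s x" for x
  proof -
    have "- x\<^sup>2 / 2 + \<mu> * x\<^sup>2 = - (x - 0)\<^sup>2 / (2 * s\<^sup>2)"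
      using assms by (simp add: s2 field_simps)
    then have "exp (- x\<^sup>2 / 2) * exp (\<mu> * x\<^sup>2) = exp (- (x - 0)\<^sup>2 / (2 * s\<^sup>2))"
      by (simp only: exp_add[symmetric])
    moreover have "sqrt (2 * pi * s\<^sup>2) = sqrt (2 * pi) * s"
      using s0 by (simp add: real_sqrt_mult)
    ultimately show ?thesis
      unfolding std_normal_density_def normal_density_def using s0 by simp
  qed
  then have "ennreal (std_normal_density x) * ennreal (exp (\<mu> * x\<^sup>2)) =
      ennreal s * ennreal (normal_density 0 s x)" for x
    using s0 by (simp add: ennreal_mult[symmetric])
  then show ?thesis
    by (simp add: nn_integral_std_gaussian nn_integral_cmult nn_integral_normal_density s0 s_def[symmetric])
qed

abbreviation std_gaussian_PiM :: "'i set \<Rightarrow> ('i \<Rightarrow> real) measure" where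
  "std_gaussian_PiM I \<equiv> PiM I (\<lambda>_. std_gaussian)"

lemma product_sigma_finite_std_gaussian: "product_sigma_finite (\<lambda>_::'i. std_gaussian)"
  unfolding product_sigma_finite_def
  using prob_space_std_gaussian prob_space_imp_sigma_finite by blast

lemma prob_space_std_gaussian_PiM: "prob_space (std_gaussian_PiM I)"
  by (rule prob_space_PiM) (rule prob_space_std_gaussian)

lemma nn_integral_exp_linear_form:
  assumes "finite I"
  shows "(\<integral>\<^sup>+\<omega>. ennreal (exp (\<Sum>j\<in>I. c j * \<omega> j)) \<partial>std_gaussian_PiM I)
       = ennreal (exp (\<Sum>j\<in>I. (c j)\<^sup>2 / 2))"
proof -
  have "(\<integral>\<^sup>+\<omega>. ennreal (exp (\<Sum>j\<in>I. c j * \<omega> j)) \<partial>std_gaussian_PiM I)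
     = (\<integral>\<^sup>+\<omega>. (\<Prod>j\<in>I. (\<lambda>j x. ennreal (exp (c j * x))) j (\<omega> j)) \<partial>std_gaussian_PiM I)"
    by (simp add: exp_sum[OF assms] prod_ennreal)
  also have "\<dots> = (\<Prod>j\<in>I. \<integral>\<^sup>+x. ennreal (exp (c j * x)) \<partial>std_gaussian)"
    by (rule product_sigma_finite.product_nn_integral_prod[OF product_sigma_finite_std_gaussian assms]) simp
  also have "\<dots> = ennreal (exp (\<Sum>j\<in>I. (c j)\<^sup>2 / 2))"
    by (simp add: nn_integral_std_gaussian_exp_linear prod_ennreal exp_sum assms)
  finally show ?thesis .
qed

lemma nn_integral_exp_weighted_squares:
  assumes "finite I" "\<And>j. j \<in> I \<Longrightarrow> \<mu> j < 1/2"
  shows "(\<integral>\<^sup>+\<omega>. ennreal (exp (\<Sum>j\<in>I. \<mu> j * (\<omega> j)\<^sup>2)) \<partial>std_gaussian_PiM I)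
       = ennreal (\<Prod>j\<in>I. 1 / sqrt (1 - 2 * \<mu> j))"
proof -
  have "(\<integral>\<^sup>+\<omega>. ennreal (exp (\<Sum>j\<in>I. \<mu> j * (\<omega> j)\<^sup>2)) \<partial>std_gaussian_PiM I)
     = (\<integral>\<^sup>+\<omega>. (\<Prod>j\<in>I. (\<lambda>j x. ennreal (exp (\<mu> j * x\<^sup>2))) j (\<omega> j)) \<partial>std_gaussian_PiM I)"
    by (simp add: exp_sum[OF assms(1)] prod_ennreal)
  also have "\<dots> = (\<Prod>j\<in>I. \<integral>\<^sup>+x. ennreal (exp (\<mu> j * x\<^sup>2)) \<partial>std_gaussian)"
    by (rule product_sigma_finite.product_nn_integral_prod[OF product_sigma_finite_std_gaussian assms(1)]) simp
  also have "\<dots> = (\<Prod>j\<in>I. ennreal (1 / sqrt (1 - 2 * \<mu> j)))"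
    by (intro prod.cong refl nn_integral_std_gaussian_exp_square assms(2))
  also have "\<dots> = ennreal (\<Prod>j\<in>I. 1 / sqrt (1 - 2 * \<mu> j))"
    using assms(2) by (subst prod_ennreal) (auto simp: mult.commute less_imp_le)
  finally show ?thesis .
qed

text \<open>Points of the product space are undefined outside I, so this holds for every coordinate.\<close>
lemma measurable_std_gaussian_PiM_coordinate [measurable]:
  "(\<lambda>\<omega>. \<omega> x) \<in> borel_measurable (std_gaussian_PiM I)"
proof (cases "x \<in> I")
  case False
  have undef: "\<omega> x = undefined" if "\<omega> \<in> space (std_gaussian_PiM I)" for \<omega> :: "'a \<Rightarrow> real"
    using that False by (auto simp: space_PiM PiE_def extensional_def)
  show ?thesis
    by (subst measurable_cong[OF undef]) simp_all
qed measurable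

lemma chernoff_bound:
  assumes [measurable]: "f \<in> borel_measurable M" and l: "l \<ge> 0"
  shows "emeasure M {x \<in> space M. c < f x}
       \<le> ennreal (exp (- l * c)) * (\<integral>\<^sup>+x. ennreal (exp (l * f x)) \<partial>M)"
proof -
  have "emeasure M {x \<in> space M. c < f x} = (\<integral>\<^sup>+x. indicator {x \<in> space M. c < f x} x \<partial>M)"
    by (rule nn_integral_indicator[symmetric]) measurable
  also have "\<dots> \<le> (\<integral>\<^sup>+x. ennreal (exp (- l * c)) * ennreal (exp (l * f x)) \<partial>M)"
  proof (rule nn_integral_mono)
    fix x assume "x \<in> space M"
    show "indicator {x \<in> space M. c < f x} x \<le> ennreal (exp (- l * c)) * ennreal (exp (l * f x))"
    proof (cases "c < f x")
      case True
      then have "l * c \<le> l * f x" using l by (intro mult_left_mono) auto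
      then have "1 \<le> exp (- l * c) * exp (l * f x)" by (simp add: exp_add[symmetric])
      then show ?thesis using True \<open>x \<in> space M\<close> by (simp add: ennreal_mult[symmetric])
    qed simp
  qed
  also have "\<dots> = ennreal (exp (- l * c)) * (\<integral>\<^sup>+x. ennreal (exp (l * f x)) \<partial>M)"
    by (rule nn_integral_cmult) measurable
  finally show ?thesis .
qed

lemma inverse_sqrt_eq_exp: "0 < y \<Longrightarrow> 1 / sqrt y = exp (- ln y / 2)"
proof -
  assume "0 < y"
  then have "sqrt y = exp (ln y / 2)"
    by (intro real_sqrt_unique) (simp_all add: power2_eq_square exp_add[symmetric])
  then show ?thesis by (simp add: exp_minus')
qed

lemma exp_mult_power_le:
  assumes "0 \<le> B" "exp a * B \<le> exp b"
  shows "exp (a * real r) * B ^ r \<le> exp (b * real r)"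
proof -
  have "exp (a * real r) * B ^ r = (exp a * B) ^ r"
    by (simp add: power_mult_distrib exp_of_nat_mult[symmetric] mult.commute)
  also have "\<dots> \<le> exp b ^ r" using assms by (intro power_mono) auto
  also have "\<dots> = exp (b * real r)" by (simp add: exp_of_nat_mult[symmetric] mult.commute)
  finally show ?thesis .
qed

lemma gaussian_linear_tail:
  assumes fin: "finite J" and t: "0 \<le> t"
  shows "emeasure (std_gaussian_PiM J) {x \<in> space (std_gaussian_PiM J).
      t * sqrt (\<Sum>j\<in>J. (w j)\<^sup>2) < (\<Sum>j\<in>J. w j * x j)} \<le> ennreal (exp (- t\<^sup>2 / 2))"
proof (cases "(\<Sum>j\<in>J. (w j)\<^sup>2) = 0")
  case True
  then have "\<forall>j\<in>J. w j = 0" using fin by (simp add: sum_nonneg_eq_0_iff)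
  then show ?thesis using True by simp
next
  case False
  define s where "s = sqrt (\<Sum>j\<in>J. (w j)\<^sup>2)"
  have "0 \<le> (\<Sum>j\<in>J. (w j)\<^sup>2)" by (simp add: sum_nonneg)
  then have s: "0 < s" using False unfolding s_def by simp
  have "emeasure (std_gaussian_PiM J) {x \<in> space (std_gaussian_PiM J). t * s < (\<Sum>j\<in>J. w j * x j)}
      \<le> ennreal (exp (- (t / s) * (t * s))) *
        (\<integral>\<^sup>+x. ennreal (exp (t / s * (\<Sum>j\<in>J. w j * x j))) \<partial>std_gaussian_PiM J)"
    by (rule chernoff_bound) (use s t in auto)
  also have "(\<integral>\<^sup>+x. ennreal (exp (t / s * (\<Sum>j\<in>J. w j * x j))) \<partial>std_gaussian_PiM J)
      = ennreal (exp (\<Sum>j\<in>J. (t / s * w j)\<^sup>2 / 2))"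
    using nn_integral_exp_linear_form[OF fin, of "\<lambda>j. t / s * w j"]
    by (simp add: sum_distrib_left mult.assoc)
  also have "(\<Sum>j\<in>J. (t / s * w j)\<^sup>2 / 2) = t\<^sup>2 / 2"
    using s by (simp add: s_def power_mult_distrib power_divide sum_divide_distrib[symmetric]
        sum_distrib_left[symmetric] sum_nonneg)
  also have "ennreal (exp (- (t / s) * (t * s))) * ennreal (exp (t\<^sup>2 / 2)) = ennreal (exp (- t\<^sup>2 / 2))"
    using s by (simp add: ennreal_mult[symmetric] exp_add[symmetric] power2_eq_square)
  finally show ?thesis unfolding s_def .
qed

text \<open>Coefficients depending only on the coordinates outside J: conditioning on those
  coordinates (Fubini over the split I = (I - J) \<union> J) freezes them.\<close>
lemma gaussian_linear_tail_indep:
  assumes fin: "finite I" and JI: "J \<subseteq> I" and t: "t \<ge> 0"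
    and meas [measurable]: "\<And>j. j \<in> J \<Longrightarrow> coef j \<in> borel_measurable (std_gaussian_PiM I)"
    and dep: "\<And>j \<omega> \<omega>'. j \<in> J \<Longrightarrow> (\<And>h. h \<in> I - J \<Longrightarrow> \<omega> h = \<omega>' h) \<Longrightarrow> coef j \<omega> = coef j \<omega>'"
  shows "emeasure (std_gaussian_PiM I) {\<omega> \<in> space (std_gaussian_PiM I).
      t * sqrt (\<Sum>j\<in>J. (coef j \<omega>)\<^sup>2) < (\<Sum>j\<in>J. coef j \<omega> * \<omega> j)} \<le> ennreal (exp (- t\<^sup>2 / 2))"
proof -
  define H where "H = I - J"
  have IHJ: "I = H \<union> J" and HJ: "H \<inter> J = {}" using JI unfolding H_def by auto
  have finH: "finite H" "finite J" using fin JI unfolding H_def by (auto intro: finite_subset)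
  define A where "A = {\<omega> \<in> space (std_gaussian_PiM I).
    t * sqrt (\<Sum>j\<in>J. (coef j \<omega>)\<^sup>2) < (\<Sum>j\<in>J. coef j \<omega> * \<omega> j)}"
  have A: "A \<in> sets (std_gaussian_PiM I)"
    unfolding A_def by measurable
  have "emeasure (std_gaussian_PiM I) A = (\<integral>\<^sup>+\<omega>. indicator A \<omega> \<partial>std_gaussian_PiM (H \<union> J))"
    using A IHJ by simp
  also have "\<dots> = (\<integral>\<^sup>+y. (\<integral>\<^sup>+x. indicator A (merge H J (y, x)) \<partial>std_gaussian_PiM J) \<partial>std_gaussian_PiM H)"
    by (rule product_sigma_finite.product_nn_integral_fold[OF product_sigma_finite_std_gaussian HJ finH])
      (use A IHJ in simp)
  also have "\<dots> \<le> (\<integral>\<^sup>+y. ennreal (exp (- t\<^sup>2 / 2)) \<partial>std_gaussian_PiM H)"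
  proof (rule nn_integral_mono)
    fix y assume y: "y \<in> space (std_gaussian_PiM H)"
    define w where "w j = coef j (merge H J (y, \<lambda>_. 0))" for j
    define B where "B = {x \<in> space (std_gaussian_PiM J). t * sqrt (\<Sum>j\<in>J. (w j)\<^sup>2) < (\<Sum>j\<in>J. w j * x j)}"
    have "(\<integral>\<^sup>+x. indicator A (merge H J (y, x)) \<partial>std_gaussian_PiM J) = (\<integral>\<^sup>+x. indicator B x \<partial>std_gaussian_PiM J)"
    proof (rule nn_integral_cong)
      fix x assume x: "x \<in> space (std_gaussian_PiM J)"
      have "merge H J (y, x) \<in> space (std_gaussian_PiM I)"
        using x y IHJ by (auto simp: space_PiM)
      moreover have "coef j (merge H J (y, x)) = w j" "merge H J (y, x) j = x j" if "j \<in> J" for j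
        unfolding w_def using that HJ by (auto intro!: dep simp: merge_def H_def)
      ultimately show "indicator A (merge H J (y, x)) = indicator B x"
        using x unfolding A_def B_def by (simp cong: sum.cong split: split_indicator)
    qed
    also have "\<dots> = emeasure (std_gaussian_PiM J) B"
      unfolding B_def by (rule nn_integral_indicator) measurable
    also have "\<dots> \<le> ennreal (exp (- t\<^sup>2 / 2))"
      unfolding B_def by (rule gaussian_linear_tail[OF finH(2) t])
    finally show "(\<integral>\<^sup>+x. indicator A (merge H J (y, x)) \<partial>std_gaussian_PiM J) \<le> ennreal (exp (- t\<^sup>2 / 2))" .
  qed
  also have "\<dots> = ennreal (exp (- t\<^sup>2 / 2))"
    using prob_space.emeasure_space_1[OF prob_space_std_gaussian_PiM[of H]] by simp
  finally show ?thesis unfolding A_def .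
qed

lemma gaussian_abs_linear_tail_indep:
  assumes fin: "finite I" and JI: "J \<subseteq> I" and t: "t \<ge> 0"
   and meas[measurable]: "\<And>j. j \<in> J \<Longrightarrow> coef j \<in> borel_measurable (std_gaussian_PiM I)"
   and dep: "\<And>j \<omega> \<omega>'. j \<in> J \<Longrightarrow> (\<And>h. h \<in> I - J \<Longrightarrow> \<omega> h = \<omega>' h) \<Longrightarrow> coef j \<omega> = coef j \<omega>'"
  shows "emeasure (std_gaussian_PiM I) {\<omega> \<in> space (std_gaussian_PiM I). t * sqrt (\<Sum>j\<in>J. (coef j \<omega>)\<^sup>2) < \<bar>\<Sum>j\<in>J. coef j \<omega> * \<omega> j\<bar>}
    \<le> ennreal (2 * exp (- t\<^sup>2 / 2))"
proof -
  let ?A = "{\<omega> \<in> space (std_gaussian_PiM I). t * sqrt (\<Sum>j\<in>J. (coef j \<omega>)\<^sup>2) < (\<Sum>j\<in>J. coef j \<omega> * \<omega> j)}"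
  let ?B = "{\<omega> \<in> space (std_gaussian_PiM I). t * sqrt (\<Sum>j\<in>J. ((\<lambda>j \<omega>. - coef j \<omega>) j \<omega>)\<^sup>2) < (\<Sum>j\<in>J. (\<lambda>j \<omega>. - coef j \<omega>) j \<omega> * \<omega> j)}"
  have A: "?A \<in> sets (std_gaussian_PiM I)" by measurable
  have B: "?B \<in> sets (std_gaussian_PiM I)" by measurable
  have eq: "{\<omega> \<in> space (std_gaussian_PiM I). t * sqrt (\<Sum>j\<in>J. (coef j \<omega>)\<^sup>2) < \<bar>\<Sum>j\<in>J. coef j \<omega> * \<omega> j\<bar>} = ?A \<union> ?B"
    by (auto simp: sum_negf abs_if)
  have "emeasure (std_gaussian_PiM I) (?A \<union> ?B) \<le> emeasure (std_gaussian_PiM I) ?A + emeasure (std_gaussian_PiM I) ?B"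
    by (rule emeasure_subadditive[OF A B])
  also have "\<dots> \<le> ennreal (exp (- t\<^sup>2 / 2)) + ennreal (exp (- t\<^sup>2 / 2))"
  proof (rule add_mono)
    show "emeasure (std_gaussian_PiM I) ?A \<le> ennreal (exp (- t\<^sup>2 / 2))" by (rule gaussian_linear_tail_indep[OF fin JI t meas dep])
    show "emeasure (std_gaussian_PiM I) ?B \<le> ennreal (exp (- t\<^sup>2 / 2))"
      by (rule gaussian_linear_tail_indep[OF fin JI t]) (simp, metis dep)
  qed
  also have "\<dots> = ennreal (2 * exp (- t\<^sup>2 / 2))" by (simp flip: ennreal_plus)
  finally show ?thesis unfolding eq .
qed

lemma gaussian_diff_tail:
  fixes R :: "'r set" and C :: "'c set" and W :: "'r \<Rightarrow> ('r \<times> 'c \<Rightarrow> real) \<Rightarrow> real"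
  assumes fR: "finite R" and fC: "finite C" and u: "u \<in> C" and v: "v \<in> C" and uv: "u \<noteq> v" and t: "t \<ge> 0"
   and meas: "\<And>i. i \<in> R \<Longrightarrow> W i \<in> borel_measurable (std_gaussian_PiM (R \<times> C))"
   and dep: "\<And>i \<omega> \<omega>'. i \<in> R \<Longrightarrow> (\<And>i' j. i' \<in> R \<Longrightarrow> j \<in> C \<Longrightarrow> j \<noteq> u \<Longrightarrow> j \<noteq> v \<Longrightarrow> \<omega> (i', j) = \<omega>' (i', j)) \<Longrightarrow> W i \<omega> = W i \<omega>'"
  shows "emeasure (std_gaussian_PiM (R \<times> C)) {\<omega> \<in> space (std_gaussian_PiM (R \<times> C)).
      t * sqrt (2 * (\<Sum>i\<in>R. (W i \<omega>)\<^sup>2)) < \<bar>\<Sum>i\<in>R. (\<omega> (i, u) - \<omega> (i, v)) * W i \<omega>\<bar>}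
    \<le> ennreal (2 * exp (- t\<^sup>2 / 2))"
proof -
  define coef where "coef ij \<omega> = (if snd ij = u then W (fst ij) \<omega> else - W (fst ij) \<omega>)" for ij \<omega>
  have fI: "finite (R \<times> C)" using fR fC by simp
  have JI: "R \<times> {u, v} \<subseteq> R \<times> C" using u v by auto
  have linear_eq: "(\<Sum>ij\<in>R \<times> {u, v}. coef ij \<omega> * \<omega> ij) = (\<Sum>i\<in>R. (\<omega> (i, u) - \<omega> (i, v)) * W i \<omega>)" for \<omega>
    unfolding sum.cartesian_product' using uv by (intro sum.cong refl) (simp add: coef_def algebra_simps)
  have norm_eq: "(\<Sum>ij\<in>R \<times> {u, v}. (coef ij \<omega>)\<^sup>2) = 2 * (\<Sum>i\<in>R. (W i \<omega>)\<^sup>2)" for \<omega>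
    unfolding sum.cartesian_product' using uv by (simp add: coef_def sum_distrib_left)
  have "emeasure (std_gaussian_PiM (R \<times> C)) {\<omega> \<in> space (std_gaussian_PiM (R \<times> C)).
      t * sqrt (\<Sum>ij\<in>R \<times> {u, v}. (coef ij \<omega>)\<^sup>2) < \<bar>\<Sum>ij\<in>R \<times> {u, v}. coef ij \<omega> * \<omega> ij\<bar>}
    \<le> ennreal (2 * exp (- t\<^sup>2 / 2))"
  proof (rule gaussian_abs_linear_tail_indep[OF fI JI t])
    fix j assume j: "j \<in> R \<times> {u, v}"
    then have "fst j \<in> R" by auto
    then show "coef j \<in> borel_measurable (std_gaussian_PiM (R \<times> C))"
      unfolding coef_def using meas by (cases "snd j = u") auto
  next
    fix j and \<omega> \<omega>' :: "'r \<times> 'c \<Rightarrow> real" assume j: "j \<in> R \<times> {u, v}" and ag: "\<And>h. h \<in> R \<times> C - R \<times> {u, v} \<Longrightarrow> \<omega> h = \<omega>' h"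
    have "W (fst j) \<omega> = W (fst j) \<omega>'"
      using j by (intro dep) (auto intro: ag)
    then show "coef j \<omega> = coef j \<omega>'" unfolding coef_def by simp
  qed
  then show ?thesis unfolding linear_eq norm_eq .
qed

lemma gaussian_coordinate_tail:
  fixes R :: "'r set" and C :: "'c set" and W :: "'r \<Rightarrow> ('r \<times> 'c \<Rightarrow> real) \<Rightarrow> real"
  assumes fR: "finite R" and fC: "finite C" and v: "v \<in> C" and t: "t \<ge> 0"
   and meas: "\<And>i. i \<in> R \<Longrightarrow> W i \<in> borel_measurable (std_gaussian_PiM (R \<times> C))"
   and dep: "\<And>i \<omega> \<omega>'. i \<in> R \<Longrightarrow> (\<And>i' j. i' \<in> R \<Longrightarrow> j \<in> C \<Longrightarrow> j \<noteq> v \<Longrightarrow> \<omega> (i', j) = \<omega>' (i', j)) \<Longrightarrow> W i \<omega> = W i \<omega>'"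
  shows "emeasure (std_gaussian_PiM (R \<times> C)) {\<omega> \<in> space (std_gaussian_PiM (R \<times> C)).
      t * sqrt (\<Sum>i\<in>R. (W i \<omega>)\<^sup>2) < \<bar>\<Sum>i\<in>R. \<omega> (i, v) * W i \<omega>\<bar>}
    \<le> ennreal (2 * exp (- t\<^sup>2 / 2))"
proof -
  define coef where "coef ij \<omega> = W (fst ij) \<omega>" for ij :: "'r \<times> 'c" and \<omega>
  have fI: "finite (R \<times> C)" using fR fC by simp
  have JI: "R \<times> {v} \<subseteq> R \<times> C" using v by auto
  have linear_eq: "(\<Sum>ij\<in>R \<times> {v}. coef ij \<omega> * \<omega> ij) = (\<Sum>i\<in>R. \<omega> (i, v) * W i \<omega>)" for \<omega>
    unfolding sum.cartesian_product' by (simp add: coef_def mult.commute)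
  have norm_eq: "(\<Sum>ij\<in>R \<times> {v}. (coef ij \<omega>)\<^sup>2) = (\<Sum>i\<in>R. (W i \<omega>)\<^sup>2)" for \<omega>
    unfolding sum.cartesian_product' by (simp add: coef_def)
  have "emeasure (std_gaussian_PiM (R \<times> C)) {\<omega> \<in> space (std_gaussian_PiM (R \<times> C)).
      t * sqrt (\<Sum>ij\<in>R \<times> {v}. (coef ij \<omega>)\<^sup>2) < \<bar>\<Sum>ij\<in>R \<times> {v}. coef ij \<omega> * \<omega> ij\<bar>}
    \<le> ennreal (2 * exp (- t\<^sup>2 / 2))"
  proof (rule gaussian_abs_linear_tail_indep[OF fI JI t])
    fix j assume j: "j \<in> R \<times> {v}"
    then have "fst j \<in> R" by auto
    then show "coef j \<in> borel_measurable (std_gaussian_PiM (R \<times> C))"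
      unfolding coef_def using meas by auto
  next
    fix j and \<omega> \<omega>' :: "'r \<times> 'c \<Rightarrow> real" assume j: "j \<in> R \<times> {v}" and ag: "\<And>h. h \<in> R \<times> C - R \<times> {v} \<Longrightarrow> \<omega> h = \<omega>' h"
    show "coef j \<omega> = coef j \<omega>'"
      unfolding coef_def using j by (intro dep) (auto intro: ag)
  qed
  then show ?thesis unfolding linear_eq norm_eq .
qed

text \<open>The mgf of a sum of squared Gaussian linear forms is computed by linearising each square
  with an auxiliary independent Gaussian vector and applying Fubini.\<close>
lemma nn_integral_exp_sum_sq_linear:
  fixes R :: "'r set" and C :: "'c set" and a :: "'c \<Rightarrow> real"
  assumes fR: "finite R" and fC: "finite C" and l: "0 \<le> l" and la: "2 * l * (\<Sum>j\<in>C. (a j)\<^sup>2) < 1"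
  shows "(\<integral>\<^sup>+\<omega>. ennreal (exp (l * (\<Sum>i\<in>R. (\<Sum>j\<in>C. a j * \<omega> (i, j))\<^sup>2))) \<partial>std_gaussian_PiM (R \<times> C))
       = ennreal ((1 / sqrt (1 - 2 * l * (\<Sum>j\<in>C. (a j)\<^sup>2))) ^ card R)"
proof -
  let ?G = "std_gaussian_PiM R" and ?M = "std_gaussian_PiM (R \<times> C)"
  define q where "q = sqrt (2 * l)"
  have q2: "q\<^sup>2 = 2 * l" using l by (simp add: q_def)
  define f where "f \<xi> \<omega> = ennreal (exp (\<Sum>i\<in>R. q * (\<Sum>j\<in>C. a j * \<omega> (i, j)) * \<xi> i))"
    for \<xi> :: "'r \<Rightarrow> real" and \<omega> :: "'r \<times> 'c \<Rightarrow> real"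
  have inner: "(\<integral>\<^sup>+\<xi>. f \<xi> \<omega> \<partial>?G) = ennreal (exp (l * (\<Sum>i\<in>R. (\<Sum>j\<in>C. a j * \<omega> (i, j))\<^sup>2)))" for \<omega>
  proof -
    have sq: "(q * y)\<^sup>2 / 2 = l * y\<^sup>2" for y by (simp add: power_mult_distrib q2)
    have "(\<integral>\<^sup>+\<xi>. f \<xi> \<omega> \<partial>?G) = ennreal (exp (\<Sum>i\<in>R. (q * (\<Sum>j\<in>C. a j * \<omega> (i, j)))\<^sup>2 / 2))"
      unfolding f_def by (rule nn_integral_exp_linear_form[OF fR])
    then show ?thesis unfolding sq sum_distrib_left[symmetric] .
  qed
  have "(\<integral>\<^sup>+\<omega>. ennreal (exp (l * (\<Sum>i\<in>R. (\<Sum>j\<in>C. a j * \<omega> (i, j))\<^sup>2))) \<partial>?M)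
      = (\<integral>\<^sup>+\<omega>. (\<integral>\<^sup>+\<xi>. f \<xi> \<omega> \<partial>?G) \<partial>?M)"
    by (simp add: inner)
  also have "\<dots> = (\<integral>\<^sup>+\<xi>. (\<integral>\<^sup>+\<omega>. f \<xi> \<omega> \<partial>?M) \<partial>?G)"
  proof (rule pair_sigma_finite.Fubini')
    show "pair_sigma_finite ?G ?M"
      unfolding pair_sigma_finite_def by (intro conjI prob_space_imp_sigma_finite prob_space_std_gaussian_PiM)
    show "case_prod f \<in> borel_measurable (?G \<Otimes>\<^sub>M ?M)"
      unfolding f_def split_beta' by measurable
  qed
  also have "\<dots> = (\<integral>\<^sup>+\<xi>. ennreal (exp (\<Sum>i\<in>R. (l * (\<Sum>j\<in>C. (a j)\<^sup>2)) * (\<xi> i)\<^sup>2)) \<partial>?G)"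
  proof (rule nn_integral_cong)
    fix \<xi> :: "'r \<Rightarrow> real"
    have "f \<xi> \<omega> = ennreal (exp (\<Sum>ij\<in>R \<times> C. (q * \<xi> (fst ij) * a (snd ij)) * \<omega> ij))" for \<omega>
      by (simp add: f_def sum.cartesian_product' sum_distrib_left sum_distrib_right mult_ac)
    then have "(\<integral>\<^sup>+\<omega>. f \<xi> \<omega> \<partial>?M) = ennreal (exp (\<Sum>ij\<in>R \<times> C. (q * \<xi> (fst ij) * a (snd ij))\<^sup>2 / 2))"
      using nn_integral_exp_linear_form[of "R \<times> C"] fR fC by simp
    also have "(\<Sum>ij\<in>R \<times> C. (q * \<xi> (fst ij) * a (snd ij))\<^sup>2 / 2) = (\<Sum>i\<in>R. (l * (\<Sum>j\<in>C. (a j)\<^sup>2)) * (\<xi> i)\<^sup>2)"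
      by (simp add: sum.cartesian_product' power_mult_distrib q2 sum_distrib_left sum_distrib_right mult_ac)
    finally show "(\<integral>\<^sup>+\<omega>. f \<xi> \<omega> \<partial>?M) = ennreal (exp (\<Sum>i\<in>R. (l * (\<Sum>j\<in>C. (a j)\<^sup>2)) * (\<xi> i)\<^sup>2))" .
  qed
  also have "\<dots> = ennreal (\<Prod>i\<in>R. 1 / sqrt (1 - 2 * (l * (\<Sum>j\<in>C. (a j)\<^sup>2))))"
    by (rule nn_integral_exp_weighted_squares[OF fR]) (use la in simp)
  finally show ?thesis by (simp add: mult.assoc)
qed

lemma gaussian_sum_sq_linear_tail:
  fixes R :: "'r set" and C :: "'c set" and a :: "'c \<Rightarrow> real"
  assumes fR: "finite R" and fC: "finite C"
  shows "emeasure (std_gaussian_PiM (R \<times> C)) {\<omega> \<in> space (std_gaussian_PiM (R \<times> C)).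
            4 * real (card R) * (\<Sum>j\<in>C. (a j)\<^sup>2) < (\<Sum>i\<in>R. (\<Sum>j\<in>C. a j * \<omega> (i, j))\<^sup>2)}
         \<le> ennreal (exp (- real (card R) / 2))"
proof (cases "(\<Sum>j\<in>C. (a j)\<^sup>2) = 0")
  case True
  then have "\<forall>j\<in>C. a j = 0" using fC by (simp add: sum_nonneg_eq_0_iff)
  then show ?thesis using True by simp
next
  case False
  define A where "A = (\<Sum>j\<in>C. (a j)\<^sup>2)"
  have "0 \<le> A" unfolding A_def by (simp add: sum_nonneg)
  then have A: "0 < A" using False unfolding A_def by simp
  let ?M = "std_gaussian_PiM (R \<times> C)" and ?Q = "\<lambda>\<omega>. \<Sum>i\<in>R. (\<Sum>j\<in>C. a j * \<omega> (i, j))\<^sup>2"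
  have "emeasure ?M {\<omega> \<in> space ?M. 4 * real (card R) * A < ?Q \<omega>}
      \<le> ennreal (exp (- (1 / (4 * A)) * (4 * real (card R) * A))) * (\<integral>\<^sup>+\<omega>. ennreal (exp (1 / (4 * A) * ?Q \<omega>)) \<partial>?M)"
    by (rule chernoff_bound) (use A in auto)
  also have "(\<integral>\<^sup>+\<omega>. ennreal (exp (1 / (4 * A) * ?Q \<omega>)) \<partial>?M) = ennreal ((1 / sqrt (1 / 2)) ^ card R)"
    using nn_integral_exp_sum_sq_linear[OF fR fC, of "1 / (4 * A)" a] A by (simp add: A_def)
  also have "ennreal (exp (- (1 / (4 * A)) * (4 * real (card R) * A))) * ennreal ((1 / sqrt (1 / 2)) ^ card R)
      = ennreal (exp (- 1 * real (card R)) * (1 / sqrt (1 / 2)) ^ card R)"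
    using A by (simp add: ennreal_mult[symmetric])
  also have "\<dots> \<le> ennreal (exp (- 1 / 2 * real (card R)))"
  proof (intro ennreal_leI exp_mult_power_le)
    have "- 1 + ln 2 / 2 \<le> - 1 / (2::real)" using ln_2_less_1 by simp
    then show "exp (- 1) * (1 / sqrt (1 / 2)) \<le> exp (- 1 / (2::real))"
      by (simp add: inverse_sqrt_eq_exp ln_div exp_add[symmetric])
  qed simp
  finally show ?thesis unfolding A_def by simp
qed

lemma nn_integral_exp_column_sq:
  fixes R :: "'r set" and C :: "'c set"
  assumes fR: "finite R" and fC: "finite C" and c0: "c0 \<in> C" and l: "l < 1/2"
  shows "(\<integral>\<^sup>+\<omega>. ennreal (exp (l * (\<Sum>i\<in>R. (\<omega> (i, c0))\<^sup>2))) \<partial>std_gaussian_PiM (R \<times> C))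
       = ennreal ((1 / sqrt (1 - 2 * l)) ^ card R)"
proof -
  define \<mu> where "\<mu> ij = (if snd ij = c0 then l else 0)" for ij :: "'r \<times> 'c"
  have fI: "finite (R \<times> C)" using fR fC by simp
  have exponent_eq: "l * (\<Sum>i\<in>R. (\<omega> (i, c0))\<^sup>2) = (\<Sum>ij\<in>R \<times> C. \<mu> ij * (\<omega> ij)\<^sup>2)" for \<omega> :: "'r \<times> 'c \<Rightarrow> real"
  proof -
    have "(\<Sum>ij\<in>R \<times> C. \<mu> ij * (\<omega> ij)\<^sup>2) = (\<Sum>i\<in>R. \<Sum>j\<in>C. (if j = c0 then l * (\<omega> (i, j))\<^sup>2 else 0))"
      unfolding sum.cartesian_product' \<mu>_def by (intro sum.cong refl) auto
    also have "\<dots> = (\<Sum>i\<in>R. l * (\<omega> (i, c0))\<^sup>2)"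
      by (intro sum.cong refl) (simp add: sum.delta[OF fC] c0)
    finally show ?thesis by (simp add: sum_distrib_left)
  qed
  have product_eq: "(\<Prod>ij\<in>R \<times> C. 1 / sqrt (1 - 2 * \<mu> ij)) = (1 / sqrt (1 - 2 * l)) ^ card R"
  proof -
    have "(\<Prod>ij\<in>R \<times> C. 1 / sqrt (1 - 2 * \<mu> ij)) = (\<Prod>i\<in>R. \<Prod>j\<in>C. (if j = c0 then 1 / sqrt (1 - 2 * l) else 1))"
      unfolding prod.cartesian_product' \<mu>_def by (intro prod.cong refl) auto
    also have "\<dots> = (\<Prod>i\<in>R. 1 / sqrt (1 - 2 * l))"
      by (intro prod.cong refl) (simp add: prod.delta[OF fC] c0)
    finally show ?thesis by simp
  qed
  have "(\<integral>\<^sup>+\<omega>. ennreal (exp (\<Sum>ij\<in>R \<times> C. \<mu> ij * (\<omega> ij)\<^sup>2)) \<partial>std_gaussian_PiM (R \<times> C))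
      = ennreal (\<Prod>ij\<in>R \<times> C. 1 / sqrt (1 - 2 * \<mu> ij))"
    by (rule nn_integral_exp_weighted_squares[OF fI]) (use l in \<open>auto simp: \<mu>_def\<close>)
  then show ?thesis by (simp only: exponent_eq product_eq)
qed

lemma chi_square_upper_rate:
  fixes \<delta> :: real
  assumes "0 \<le> \<delta>" "\<delta> \<le> 1"
  shows "exp (- (\<delta> / 8) * (1 + \<delta>)) * (1 / sqrt (1 - 2 * (\<delta> / 8))) \<le> exp (- \<delta>\<^sup>2 / 16)"
proof -
  have "- (\<delta> / 4) - 2 * (\<delta> / 4)\<^sup>2 \<le> ln (1 - \<delta> / 4)"
    by (rule ln_one_minus_pos_lower_bound) (use assms in auto)
  then have "- (\<delta> / 8) * (1 + \<delta>) + - ln (1 - \<delta> / 4) / 2 \<le> - \<delta>\<^sup>2 / 16"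
    by (simp add: power2_eq_square field_simps)
  moreover have "1 - 2 * (\<delta> / 8) = 1 - \<delta> / 4" by simp
  ultimately show ?thesis
    using assms by (simp add: inverse_sqrt_eq_exp exp_add[symmetric])
qed

lemma chi_square_lower_rate:
  fixes \<delta> :: real
  assumes "0 \<le> \<delta>" "\<delta> \<le> 1"
  shows "exp ((\<delta> / 8) * (1 - \<delta>)) * (1 / sqrt (1 - 2 * (- (\<delta> / 8)))) \<le> exp (- \<delta>\<^sup>2 / 16)"
proof -
  have "\<delta> / 4 - (\<delta> / 4)\<^sup>2 \<le> ln (1 + \<delta> / 4)"
    by (rule ln_one_plus_pos_lower_bound) (use assms in auto)
  moreover have "(\<delta> / 4)\<^sup>2 = \<delta>\<^sup>2 / 16" "(\<delta> / 8) * (1 - \<delta>) = \<delta> / 8 - \<delta>\<^sup>2 / 8"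
    by (simp_all add: power2_eq_square field_simps)
  ultimately have "(\<delta> / 8) * (1 - \<delta>) + - ln (1 + \<delta> / 4) / 2 \<le> - \<delta>\<^sup>2 / 16"
    using zero_le_power2[of \<delta>] by linarith
  moreover have "1 - 2 * (- (\<delta> / 8)) = 1 + \<delta> / 4" by simp
  ultimately show ?thesis
    using assms by (simp add: inverse_sqrt_eq_exp exp_add[symmetric])
qed

lemma chi_square_upper_tail:
  fixes R :: "'r set" and C :: "'c set"
  assumes fR: "finite R" and fC: "finite C" and c0: "c0 \<in> C" and d: "0 \<le> \<delta>" "\<delta> \<le> 1"
  shows "emeasure (std_gaussian_PiM (R \<times> C)) {\<omega> \<in> space (std_gaussian_PiM (R \<times> C)). real (card R) * (1 + \<delta>) < (\<Sum>i\<in>R. (\<omega> (i, c0))\<^sup>2)}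
    \<le> ennreal (exp (- \<delta>\<^sup>2 / 16 * real (card R)))"
proof -
  have l0: "\<delta>/8 \<ge> 0" using d by simp
  have "emeasure (std_gaussian_PiM (R \<times> C)) {\<omega> \<in> space (std_gaussian_PiM (R \<times> C)). real (card R) * (1 + \<delta>) < (\<Sum>i\<in>R. (\<omega> (i, c0))\<^sup>2)}
      \<le> ennreal (exp (- (\<delta>/8) * (real (card R) * (1 + \<delta>)))) * (\<integral>\<^sup>+\<omega>. ennreal (exp ((\<delta>/8) * (\<Sum>i\<in>R. (\<omega> (i, c0))\<^sup>2))) \<partial>std_gaussian_PiM (R \<times> C))"
    by (rule chernoff_bound[OF _ l0]) measurable
  also have "(\<integral>\<^sup>+\<omega>. ennreal (exp ((\<delta>/8) * (\<Sum>i\<in>R. (\<omega> (i, c0))\<^sup>2))) \<partial>std_gaussian_PiM (R \<times> C))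
      = ennreal ((1 / sqrt (1 - 2 * (\<delta>/8))) ^ card R)"
    by (rule nn_integral_exp_column_sq[OF fR fC c0]) (use d in simp)
  also have "ennreal (exp (- (\<delta>/8) * (real (card R) * (1 + \<delta>)))) * ennreal ((1 / sqrt (1 - 2 * (\<delta>/8))) ^ card R)
      = ennreal (exp (- (\<delta>/8) * (1 + \<delta>) * real (card R)) * (1 / sqrt (1 - 2 * (\<delta>/8))) ^ card R)"
    using d by (simp add: ennreal_mult[symmetric] mult_ac)
  also have "\<dots> \<le> ennreal (exp (- \<delta>\<^sup>2 / 16 * real (card R)))"
    using d by (intro ennreal_leI exp_mult_power_le chi_square_upper_rate) auto
  finally show ?thesis .
qed

lemma chi_square_lower_tail:
  fixes R :: "'r set" and C :: "'c set"
  assumes fR: "finite R" and fC: "finite C" and c0: "c0 \<in> C" and d: "0 \<le> \<delta>" "\<delta> \<le> 1"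
  shows "emeasure (std_gaussian_PiM (R \<times> C)) {\<omega> \<in> space (std_gaussian_PiM (R \<times> C)). (\<Sum>i\<in>R. (\<omega> (i, c0))\<^sup>2) < real (card R) * (1 - \<delta>)}
    \<le> ennreal (exp (- \<delta>\<^sup>2 / 16 * real (card R)))"
proof -
  have l0: "\<delta>/8 \<ge> 0" using d by simp
  have fm: "(\<lambda>\<omega>. - (\<Sum>i\<in>R. (\<omega> (i, c0))\<^sup>2)) \<in> borel_measurable (std_gaussian_PiM (R \<times> C))"
    by measurable
  have "emeasure (std_gaussian_PiM (R \<times> C)) {\<omega> \<in> space (std_gaussian_PiM (R \<times> C)). (\<Sum>i\<in>R. (\<omega> (i, c0))\<^sup>2) < real (card R) * (1 - \<delta>)}
      = emeasure (std_gaussian_PiM (R \<times> C)) {\<omega> \<in> space (std_gaussian_PiM (R \<times> C)). - (real (card R) * (1 - \<delta>)) < - (\<Sum>i\<in>R. (\<omega> (i, c0))\<^sup>2)}"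
    by simp
  also have "\<dots> \<le> ennreal (exp (- (\<delta>/8) * (- (real (card R) * (1 - \<delta>))))) * (\<integral>\<^sup>+\<omega>. ennreal (exp ((\<delta>/8) * (- (\<Sum>i\<in>R. (\<omega> (i, c0))\<^sup>2)))) \<partial>std_gaussian_PiM (R \<times> C))"
    by (rule chernoff_bound[OF fm l0])
  also have "(\<integral>\<^sup>+\<omega>. ennreal (exp ((\<delta>/8) * (- (\<Sum>i\<in>R. (\<omega> (i, c0))\<^sup>2)))) \<partial>std_gaussian_PiM (R \<times> C))
      = (\<integral>\<^sup>+\<omega>. ennreal (exp ((- (\<delta>/8)) * (\<Sum>i\<in>R. (\<omega> (i, c0))\<^sup>2))) \<partial>std_gaussian_PiM (R \<times> C))"
    by simp
  also have "\<dots> = ennreal ((1 / sqrt (1 - 2 * (- (\<delta>/8)))) ^ card R)"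
    by (rule nn_integral_exp_column_sq[OF fR fC c0]) (use d in simp)
  also have "ennreal (exp (- (\<delta>/8) * (- (real (card R) * (1 - \<delta>))))) * ennreal ((1 / sqrt (1 - 2 * (- (\<delta>/8)))) ^ card R)
      = ennreal (exp ((\<delta>/8) * (1 - \<delta>) * real (card R)) * (1 / sqrt (1 - 2 * (- (\<delta>/8)))) ^ card R)"
    using d by (simp add: ennreal_mult[symmetric] mult_ac)
  also have "\<dots> \<le> ennreal (exp (- \<delta>\<^sup>2 / 16 * real (card R)))"
    using d by (intro ennreal_leI exp_mult_power_le chi_square_lower_rate) auto
  finally show ?thesis .
qed

lemma chi_square_tail:
  fixes R :: "'r set" and C :: "'c set"
  assumes fR: "finite R" and fC: "finite C" and c0: "c0 \<in> C" and d: "0 \<le> \<delta>" "\<delta> \<le> 1"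
  shows "emeasure (std_gaussian_PiM (R \<times> C)) {\<omega> \<in> space (std_gaussian_PiM (R \<times> C)).
      real (card R) * \<delta> < \<bar>(\<Sum>i\<in>R. (\<omega> (i, c0))\<^sup>2) - real (card R)\<bar>}
    \<le> ennreal (2 * exp (- \<delta>\<^sup>2 / 16 * real (card R)))"
proof -
  let ?M = "std_gaussian_PiM (R \<times> C)" and ?Q = "\<lambda>\<omega>. \<Sum>i\<in>R. (\<omega> (i, c0))\<^sup>2"
  let ?U = "{\<omega> \<in> space ?M. real (card R) * (1 + \<delta>) < ?Q \<omega>}"
  let ?L = "{\<omega> \<in> space ?M. ?Q \<omega> < real (card R) * (1 - \<delta>)}"
  have "emeasure ?M {\<omega> \<in> space ?M. real (card R) * \<delta> < \<bar>?Q \<omega> - real (card R)\<bar>} = emeasure ?M (?U \<union> ?L)"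
    by (rule arg_cong[where f = "emeasure ?M"]) (auto simp: algebra_simps abs_if)
  also have "\<dots> \<le> emeasure ?M ?U + emeasure ?M ?L"
    by (rule emeasure_subadditive) measurable
  also have "\<dots> \<le> ennreal (exp (- \<delta>\<^sup>2 / 16 * real (card R))) + ennreal (exp (- \<delta>\<^sup>2 / 16 * real (card R)))"
    by (intro add_mono chi_square_upper_tail chi_square_lower_tail assms)
  finally show ?thesis by (simp flip: ennreal_plus)
qed

lemma col_norm_nonneg: "0 \<le> col_norm n X c"
  unfolding col_norm_def by (simp add: sum_nonneg)

lemma col_norm_eq_0D:
  assumes "col_norm n X c = 0" "i < n"
  shows "X i c = 0"
proof -
  have "(\<Sum>i<n. (X i c)\<^sup>2) = 0"
    using assms(1) unfolding col_norm_def by (simp add: sum_nonneg)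
  then show ?thesis
    using assms(2) by (subst (asm) sum_nonneg_eq_0_iff) auto
qed

lemma ne_crit_le:
  assumes "0 \<le> \<tau>"
    and "\<And>c. c < p \<Longrightarrow> c \<noteq> a \<Longrightarrow> c \<noteq> b \<Longrightarrow> \<bar>\<Sum>i<n. (X i a - X i b) * X i c\<bar> \<le> \<tau> * col_norm n X c"
  shows "ne_crit n p X a b \<le> \<tau>"
proof -
  have "\<bar>(\<Sum>i<n. (X i a - X i b) * X i c) / col_norm n X c\<bar> \<le> \<tau>"
    if "c < p" "c \<noteq> a" "c \<noteq> b" for c
  proof (cases "col_norm n X c = 0")
    case False
    then have "0 < col_norm n X c" using col_norm_nonneg[of n X c] by simp
    then show ?thesis using assms(2)[OF that] by (simp add: abs_divide divide_le_eq)
  qed (use assms(1) in simp)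
  then show ?thesis
    unfolding ne_crit_def using assms(1) by (subst Max_le_iff) auto
qed

lemma abs_inner_le_ne_crit:
  assumes "c < p" "c \<noteq> a" "c \<noteq> b"
  shows "\<bar>\<Sum>i<n. (X i a - X i b) * X i c\<bar> \<le> ne_crit n p X a b * col_norm n X c"
proof (cases "col_norm n X c = 0")
  case True
  then show ?thesis by (simp add: col_norm_eq_0D)
next
  case False
  then have pos: "0 < col_norm n X c" using col_norm_nonneg[of n X c] by simp
  have "\<bar>(\<Sum>i<n. (X i a - X i b) * X i c) / col_norm n X c\<bar> \<le> ne_crit n p X a b"
    unfolding ne_crit_def by (rule Max_ge) (use assms in auto)
  then show ?thesis using pos by (simp add: abs_divide divide_le_eq)
qed

text \<open>With b = ne a, the difference equals <X a - X b, X a'> - <X a - X a', X b>; the first term is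
  bounded by the criterion of b, which is at most that of a', and the second by the hypothesis.\<close>
lemma ne_inner_close_to_partner:
  assumes ne: "is_ne n p X ne" and a: "a < p" and a': "a' < p" "a' \<noteq> a" and "0 \<le> \<tau>"
    and partner: "\<And>c. c < p \<Longrightarrow> c \<noteq> a \<Longrightarrow> c \<noteq> a' \<Longrightarrow>
      \<bar>\<Sum>i<n. (X i a - X i a') * X i c\<bar> \<le> \<tau> * col_norm n X c"
  shows "\<bar>(\<Sum>i<n. (X i a - X i (ne a)) * X i a) - (\<Sum>i<n. (X i a - X i a') * X i a)\<bar>
    \<le> \<tau> * (col_norm n X a' + col_norm n X (ne a))"
proof (cases "ne a = a'")
  case True
  then show ?thesis using \<open>0 \<le> \<tau>\<close> by (simp add: col_norm_nonneg)
next
  case False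
  define b where "b = ne a"
  have b: "b < p" "b \<noteq> a" "b \<noteq> a'" "ne_crit n p X a b \<le> ne_crit n p X a a'"
    using ne a a' False unfolding is_ne_def b_def by auto
  have crit_a': "ne_crit n p X a a' \<le> \<tau>"
    by (rule ne_crit_le[OF \<open>0 \<le> \<tau>\<close> partner])
  have "(X i a - X i b) * X i a - (X i a - X i a') * X i a
      = (X i a - X i b) * X i a' - (X i a - X i a') * X i b" for i
    by (simp add: algebra_simps)
  then have "(\<Sum>i<n. (X i a - X i b) * X i a) - (\<Sum>i<n. (X i a - X i a') * X i a)
      = (\<Sum>i<n. (X i a - X i b) * X i a') - (\<Sum>i<n. (X i a - X i a') * X i b)"
    by (simp add: sum_subtractf[symmetric])
  moreover have "\<bar>\<Sum>i<n. (X i a - X i b) * X i a'\<bar> \<le> \<tau> * col_norm n X a'"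
  proof -
    have "\<bar>\<Sum>i<n. (X i a - X i b) * X i a'\<bar> \<le> ne_crit n p X a b * col_norm n X a'"
      by (rule abs_inner_le_ne_crit) (use a' b in auto)
    also have "\<dots> \<le> \<tau> * col_norm n X a'"
      using b(4) crit_a' by (intro mult_right_mono col_norm_nonneg) auto
    finally show ?thesis .
  qed
  moreover have "\<bar>\<Sum>i<n. (X i a - X i a') * X i b\<bar> \<le> \<tau> * col_norm n X b"
    using partner b by auto
  ultimately show ?thesis unfolding b_def[symmetric] by (simp add: distrib_left)
qed

lemma abs_le_mat_sup:
  assumes "a < p" "b < p"
  shows "\<bar>M a b\<bar> \<le> mat_sup p M"
  unfolding mat_sup_def by (rule Max_ge) (use assms in auto)

lemma mat_sup_le:
  assumes "0 < p" "\<And>a b. a < p \<Longrightarrow> b < p \<Longrightarrow> \<bar>M a b\<bar> \<le> B"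
  shows "mat_sup p M \<le> B"
  unfolding mat_sup_def using assms by (subst Max_le_iff) auto

lemma diag_V_le_mat_sup:
  assumes "0 < p"
  shows "diag_V p D \<le> 2 * mat_sup p (\<lambda>a b. if a = b then D a else 0)"
proof -
  let ?S = "mat_sup p (\<lambda>a b. if a = b then D a else 0)"
  have D: "\<bar>D a\<bar> \<le> ?S" if "a < p" for a
    using abs_le_mat_sup[OF that that, of "\<lambda>a b. if a = b then D a else 0"] by simp
  have "Max (D ` {..<p}) \<in> D ` {..<p}" "Min (D ` {..<p}) \<in> D ` {..<p}"
    using assms by (auto intro!: Max_in Min_in)
  then obtain a1 a2 where "a1 < p" "Max (D ` {..<p}) = D a1" "a2 < p" "Min (D ` {..<p}) = D a2"
    by auto
  then show ?thesis
    unfolding diag_V_def using D[of a1] D[of a2] by linarith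
qed

lemma sqrt_mult_abs_le:
  assumes "\<bar>s\<bar> \<le> t * sqrt (2 * Q)" "0 \<le> g"
  shows "sqrt g * \<bar>s\<bar> \<le> sqrt (2 * g) * t * sqrt Q"
proof -
  have "sqrt g * \<bar>s\<bar> \<le> sqrt g * (t * sqrt (2 * Q))"
    by (rule mult_left_mono[OF assms(1)]) (use assms(2) in simp)
  then show ?thesis by (simp add: real_sqrt_mult mult_ac)
qed

text \<open>Turns the error terms of the estimator (with l = ln p and N = n) into the final rate.\<close>
lemma deviation_bound_arith:
  fixes N l g S G e :: real
  assumes N: "0 < N" and l: "0 \<le> l" and g: "0 < g" "g \<le> S" "g \<le> G"
    and e: "\<bar>e\<bar> \<le> 6 * (sqrt (2 * g) * sqrt (6 * l) * sqrt (N * S)) + g * (N * sqrt (48 * l / N))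
      + g * (sqrt (6 * l) * sqrt (2 * N))"
  shows "\<bar>e / N\<bar> \<le> 35 * sqrt G * sqrt S * sqrt (l / N)"
proof -
  define r q where "r = sqrt (l * N)" and "q = sqrt (G * S)"
  have r: "0 \<le> r" using l N by (simp add: r_def)
  have gS: "sqrt (g * S) \<le> q"
    unfolding q_def using g by (intro real_sqrt_le_mono mult_right_mono) auto
  have "g = sqrt (g * g)" using g by simp
  also have "\<dots> \<le> sqrt (g * S)" using g by (intro real_sqrt_le_mono mult_left_mono) auto
  finally have g_le_q: "g \<le> q" using gS by linarith
  have sqrt12: "sqrt 12 \<le> (4::real)" and sqrt48: "sqrt 48 \<le> (7::real)"
    by (rule real_le_lsqrt; simp)+
  have sqrt_2_6: "sqrt 2 * sqrt 6 = sqrt (12::real)"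
    by (simp add: real_sqrt_mult[symmetric])
  have e1: "sqrt (2 * g) * sqrt (6 * l) * sqrt (N * S) = sqrt 12 * sqrt (g * S) * r"
    and e2: "N * sqrt (48 * l / N) = sqrt 48 * r" and e3: "sqrt (6 * l) * sqrt (2 * N) = sqrt 12 * r"
    and r_div: "r / N = sqrt (l / N)"
    using N unfolding r_def by (simp_all add: real_sqrt_mult real_sqrt_divide field_simps sqrt_2_6)
  have "sqrt 12 * sqrt (g * S) * r \<le> 4 * q * r"
    using sqrt12 gS r g by (intro mult_right_mono mult_mono) auto
  moreover have "g * (sqrt 48 * r) \<le> q * (7 * r)" "g * (sqrt 12 * r) \<le> q * (4 * r)"
    using sqrt12 sqrt48 g_le_q g r by (auto intro!: mult_mono)
  ultimately have "\<bar>e\<bar> \<le> 35 * q * r"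
    using e unfolding e1 e2 e3 by (simp add: algebra_simps)
  then show ?thesis
    using N unfolding q_def by (simp add: abs_divide divide_right_mono real_sqrt_mult mult.assoc flip: r_div)
qed

lemma measure_le_ennreal: "emeasure M A \<le> ennreal B \<Longrightarrow> 0 \<le> B \<Longrightarrow> measure M A \<le> B"
  unfolding measure_def by (rule enn2real_leI)

lemma exp_neg_3_ln:
  assumes "0 < x"
  shows "exp (- (3 * ln x)) = 1 / (x::real) ^ 3"
proof -
  have "exp (3 * ln x) = exp (ln x) ^ 3" by (simp add: exp_of_nat_mult[symmetric])
  then show ?thesis using assms by (simp add: exp_minus')
qed

lemma sum_lessThan_add_if:
  fixes m k :: nat
  shows "(\<Sum>j<m + k. if j < m then f j else 0) = (\<Sum>j<m. f j)"
proof -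
  have "{..<m + k} \<inter> {j. j < m} = {..<m}" by auto
  then show ?thesis by (simp add: sum.If_cases)
qed

locale latent_model =
  fixes n p K :: nat and grp :: "nat \<Rightarrow> nat" and \<gamma> :: "nat \<Rightarrow> real" and C L :: "nat \<Rightarrow> nat \<Rightarrow> real"
  assumes K_pos: "0 < K"
    and grp_less: "\<And>a. a < p \<Longrightarrow> grp a < K"
    and group_card: "\<And>k. k < K \<Longrightarrow> 2 \<le> card {a. a < p \<and> grp a = k}"
    and \<gamma>_pos: "\<And>k. k < K \<Longrightarrow> 0 < \<gamma> k"
    and C_eq: "\<And>k l. k < K \<Longrightarrow> l < K \<Longrightarrow> C k l = (\<Sum>j<K. L k j * L l j)"
    and sample_size: "48 * ln (real p) \<le> real n"
begin

abbreviation \<Omega> :: "(nat \<times> nat \<Rightarrow> real) measure" where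
  "\<Omega> \<equiv> std_gaussian_PiM ({..<n} \<times> {..<K + p})"

abbreviation X :: "(nat \<times> nat \<Rightarrow> real) \<Rightarrow> nat \<Rightarrow> nat \<Rightarrow> real" where
  "X \<omega> \<equiv> Xdat L grp \<gamma> K \<omega>"

definition latent :: "(nat \<times> nat \<Rightarrow> real) \<Rightarrow> nat \<Rightarrow> nat \<Rightarrow> real" where
  "latent \<omega> i k = (\<Sum>j<K. L k j * \<omega> (i, j))"

abbreviation noise :: "(nat \<times> nat \<Rightarrow> real) \<Rightarrow> nat \<Rightarrow> nat \<Rightarrow> real" where
  "noise \<omega> i a \<equiv> \<omega> (i, K + a)"

lemma X_eq: "X \<omega> i a = latent \<omega> i (grp a) + sqrt (\<gamma> (grp a)) * noise \<omega> i a"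
  by (simp add: Xdat_def latent_def)

lemma measurable_latent [measurable]: "(\<lambda>\<omega>. latent \<omega> i k) \<in> borel_measurable (std_gaussian_PiM I)"
  unfolding latent_def by measurable

lemma measurable_X [measurable]: "(\<lambda>\<omega>. X \<omega> i a) \<in> borel_measurable (std_gaussian_PiM I)"
  unfolding Xdat_def by measurable

lemma p_ge_2: "2 \<le> p"
proof -
  have "2 \<le> card {a. a < p \<and> grp a = 0}" using group_card K_pos by auto
  also have "\<dots> \<le> card {..<p}" by (rule card_mono) auto
  finally show ?thesis by simp
qed

lemma ln_p_pos: "0 < ln (real p)"
  using p_ge_2 by simp

lemma n_pos: "0 < n"
  using sample_size ln_p_pos by (cases n) auto

definition partner :: "nat \<Rightarrow> nat" where
  "partner a = (SOME b. b < p \<and> b \<noteq> a \<and> grp b = grp a)"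

lemma partner:
  assumes "a < p"
  shows "partner a < p" "partner a \<noteq> a" "grp (partner a) = grp a"
proof -
  have "\<exists>b. b < p \<and> b \<noteq> a \<and> grp b = grp a"
  proof (rule ccontr)
    assume "\<nexists>b. b < p \<and> b \<noteq> a \<and> grp b = grp a"
    then have "{b. b < p \<and> grp b = grp a} \<subseteq> {a}" by auto
    then have "card {b. b < p \<and> grp b = grp a} \<le> 1"
      using card_mono[of "{a}"] by fastforce
    then show False using group_card[of "grp a"] grp_less[OF assms] by simp
  qed
  then show "partner a < p" "partner a \<noteq> a" "grp (partner a) = grp a"
    unfolding partner_def by (metis (mono_tags, lifting) someI_ex)+
qed

definition X_coef :: "nat \<Rightarrow> nat \<Rightarrow> real" where
  "X_coef a j = (if j < K then L (grp a) j else 0) + (if j = K + a then sqrt (\<gamma> (grp a)) else 0)"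

definition latent_coef :: "nat \<Rightarrow> nat \<Rightarrow> real" where
  "latent_coef k j = (if j < K then L k j else 0)"

lemma sum_X_coef:
  assumes "a < p"
  shows "(\<Sum>j<K + p. X_coef a j * \<omega> (i, j)) = X \<omega> i a"
proof -
  have "X_coef a j * \<omega> (i, j) = (if j < K then L (grp a) j * \<omega> (i, j) else 0)
      + (if j = K + a then sqrt (\<gamma> (grp a)) * \<omega> (i, j) else 0)" for j
    by (simp add: X_coef_def distrib_right)
  then show ?thesis
    using assms by (simp add: sum.distrib sum_lessThan_add_if sum.delta' Xdat_def)
qed

lemma sum_X_coef_sq:
  assumes "a < p"
  shows "(\<Sum>j<K + p. (X_coef a j)\<^sup>2) = Sigma_mat grp C \<gamma> a a"
proof -
  have "(X_coef a j)\<^sup>2 = (if j < K then L (grp a) j * L (grp a) j else 0)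
      + (if j = K + a then \<gamma> (grp a) else 0)" for j
    using \<gamma>_pos[OF grp_less[OF assms]] by (simp add: X_coef_def power2_eq_square)
  then show ?thesis
    using assms C_eq[OF grp_less grp_less, OF assms assms]
    by (simp add: sum.distrib sum_lessThan_add_if sum.delta' Sigma_mat_def)
qed

lemma sum_latent_coef: "(\<Sum>j<K + p. latent_coef k j * \<omega> (i, j)) = latent \<omega> i k"
proof -
  have "latent_coef k j * \<omega> (i, j) = (if j < K then L k j * \<omega> (i, j) else 0)" for j
    by (simp add: latent_coef_def)
  then show ?thesis by (simp add: sum_lessThan_add_if latent_def)
qed

lemma sum_latent_coef_sq:
  assumes "k < K"
  shows "(\<Sum>j<K + p. (latent_coef k j)\<^sup>2) = C k k"
proof -
  have "(latent_coef k j)\<^sup>2 = (if j < K then L k j * L k j else 0)" for j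
    by (simp add: latent_coef_def power2_eq_square)
  then show ?thesis by (simp add: sum_lessThan_add_if C_eq[OF assms assms])
qed

text \<open>The thresholds are chosen so that each deviation event below has probability O(p^-3);
  the union bound over O(p^2) of them leaves O(1/p).\<close>
definition thr :: real where
  "thr = sqrt (6 * ln (real p))"

definition \<delta> :: real where
  "\<delta> = sqrt (48 * ln (real p) / real n)"

lemma thr_nonneg: "0 \<le> thr"
  using ln_p_pos by (simp add: thr_def)

lemma exp_thr: "exp (- thr\<^sup>2 / 2) = 1 / real p ^ 3"
  using ln_p_pos p_ge_2 by (simp add: thr_def exp_neg_3_ln[symmetric])

lemma \<delta>_bounds: "0 \<le> \<delta>" "\<delta> \<le> 1"
  using ln_p_pos sample_size n_pos by (auto simp: \<delta>_def)

lemma exp_\<delta>: "exp (- \<delta>\<^sup>2 / 16 * real n) = 1 / real p ^ 3"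
  using ln_p_pos n_pos p_ge_2 by (simp add: \<delta>_def exp_neg_3_ln[symmetric])

lemma exp_half_n_le: "exp (- real n / 2) \<le> 1 / real p ^ 3"
proof -
  have "exp (- real n / 2) \<le> exp (- (3 * ln (real p)))"
    using sample_size by simp
  then show ?thesis using p_ge_2 by (simp add: exp_neg_3_ln)
qed

definition cross_dev :: "nat \<Rightarrow> nat \<Rightarrow> (nat \<times> nat \<Rightarrow> real) set" where
  "cross_dev a c = {\<omega> \<in> space \<Omega>. thr * sqrt (2 * (\<Sum>i<n. (X \<omega> i c)\<^sup>2))
      < \<bar>\<Sum>i<n. (noise \<omega> i a - noise \<omega> i (partner a)) * X \<omega> i c\<bar>}"

definition latent_dev :: "nat \<Rightarrow> (nat \<times> nat \<Rightarrow> real) set" where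
  "latent_dev a = {\<omega> \<in> space \<Omega>. thr * sqrt (2 * (\<Sum>i<n. (latent \<omega> i (grp a))\<^sup>2))
      < \<bar>\<Sum>i<n. (noise \<omega> i a - noise \<omega> i (partner a)) * latent \<omega> i (grp a)\<bar>}"

definition noise_cross_dev :: "nat \<Rightarrow> (nat \<times> nat \<Rightarrow> real) set" where
  "noise_cross_dev a = {\<omega> \<in> space \<Omega>. thr * sqrt (\<Sum>i<n. (noise \<omega> i a)\<^sup>2)
      < \<bar>\<Sum>i<n. noise \<omega> i (partner a) * noise \<omega> i a\<bar>}"

definition norm_dev :: "(nat \<Rightarrow> real) \<Rightarrow> (nat \<times> nat \<Rightarrow> real) set" where
  "norm_dev v = {\<omega> \<in> space \<Omega>. 4 * real n * (\<Sum>j<K + p. (v j)\<^sup>2)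
      < (\<Sum>i<n. (\<Sum>j<K + p. v j * \<omega> (i, j))\<^sup>2)}"

definition noise_norm_dev :: "nat \<Rightarrow> (nat \<times> nat \<Rightarrow> real) set" where
  "noise_norm_dev a = {\<omega> \<in> space \<Omega>. real n * \<delta> < \<bar>(\<Sum>i<n. (noise \<omega> i a)\<^sup>2) - real n\<bar>}"

definition bad_at :: "nat \<Rightarrow> (nat \<times> nat \<Rightarrow> real) set" where
  "bad_at a = (\<Union>c\<in>{c. c < p \<and> c \<noteq> a \<and> c \<noteq> partner a}. cross_dev a c) \<union> latent_dev a
     \<union> noise_cross_dev a \<union> norm_dev (X_coef a) \<union> norm_dev (latent_coef (grp a)) \<union> noise_norm_dev a"

definition good_event :: "(nat \<times> nat \<Rightarrow> real) set" where
  "good_event = space \<Omega> - (\<Union>a<p. bad_at a)"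

lemma sets_bad_at: "bad_at a \<in> sets \<Omega>"
  unfolding bad_at_def cross_dev_def latent_dev_def noise_cross_dev_def norm_dev_def noise_norm_dev_def
  by measurable

lemma measure_cross_dev:
  assumes "a < p" "c < p" "c \<noteq> a" "c \<noteq> partner a"
  shows "measure \<Omega> (cross_dev a c) \<le> 2 / real p ^ 3"
proof (rule measure_le_ennreal)
  have "emeasure \<Omega> (cross_dev a c) \<le> ennreal (2 * exp (- thr\<^sup>2 / 2))"
    unfolding cross_dev_def
  proof (rule gaussian_diff_tail[OF _ _ _ _ _ thr_nonneg])
    show "K + a \<in> {..<K + p}" "K + partner a \<in> {..<K + p}" "K + a \<noteq> K + partner a"
      using assms partner[of a] by auto
  next
    fix i and \<omega> \<omega>' :: "nat \<times> nat \<Rightarrow> real"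
    assume "i \<in> {..<n}" and "\<And>i' j. i' \<in> {..<n} \<Longrightarrow> j \<in> {..<K + p} \<Longrightarrow> j \<noteq> K + a
      \<Longrightarrow> j \<noteq> K + partner a \<Longrightarrow> \<omega> (i', j) = \<omega>' (i', j)"
    then show "X \<omega> i c = X \<omega>' i c"
      using assms unfolding Xdat_def by (auto intro!: sum.cong arg_cong2[where f = "(+)"])
  qed auto
  then show "emeasure \<Omega> (cross_dev a c) \<le> ennreal (2 / real p ^ 3)"
    by (simp only: exp_thr) simp
qed simp

lemma measure_latent_dev:
  assumes "a < p"
  shows "measure \<Omega> (latent_dev a) \<le> 2 / real p ^ 3"
proof (rule measure_le_ennreal)
  have "emeasure \<Omega> (latent_dev a) \<le> ennreal (2 * exp (- thr\<^sup>2 / 2))"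
    unfolding latent_dev_def
  proof (rule gaussian_diff_tail[OF _ _ _ _ _ thr_nonneg])
    show "K + a \<in> {..<K + p}" "K + partner a \<in> {..<K + p}" "K + a \<noteq> K + partner a"
      using assms partner[of a] by auto
  next
    fix i and \<omega> \<omega>' :: "nat \<times> nat \<Rightarrow> real"
    assume "i \<in> {..<n}" and "\<And>i' j. i' \<in> {..<n} \<Longrightarrow> j \<in> {..<K + p} \<Longrightarrow> j \<noteq> K + a
      \<Longrightarrow> j \<noteq> K + partner a \<Longrightarrow> \<omega> (i', j) = \<omega>' (i', j)"
    then show "latent \<omega> i (grp a) = latent \<omega>' i (grp a)"
      unfolding latent_def by (auto intro!: sum.cong)
  qed auto
  then show "emeasure \<Omega> (latent_dev a) \<le> ennreal (2 / real p ^ 3)"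
    by (simp only: exp_thr) simp
qed simp

lemma measure_noise_cross_dev:
  assumes "a < p"
  shows "measure \<Omega> (noise_cross_dev a) \<le> 2 / real p ^ 3"
proof (rule measure_le_ennreal)
  have "emeasure \<Omega> (noise_cross_dev a) \<le> ennreal (2 * exp (- thr\<^sup>2 / 2))"
    unfolding noise_cross_dev_def
  proof (rule gaussian_coordinate_tail[OF _ _ _ thr_nonneg])
    show "K + partner a \<in> {..<K + p}" using partner[OF assms] by auto
  next
    fix i and \<omega> \<omega>' :: "nat \<times> nat \<Rightarrow> real"
    assume "i \<in> {..<n}" and "\<And>i' j. i' \<in> {..<n} \<Longrightarrow> j \<in> {..<K + p}
      \<Longrightarrow> j \<noteq> K + partner a \<Longrightarrow> \<omega> (i', j) = \<omega>' (i', j)"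
    then show "noise \<omega> i a = noise \<omega>' i a"
      using assms partner[OF assms] by auto
  qed auto
  then show "emeasure \<Omega> (noise_cross_dev a) \<le> ennreal (2 / real p ^ 3)"
    by (simp only: exp_thr) simp
qed simp

lemma measure_norm_dev: "measure \<Omega> (norm_dev v) \<le> 1 / real p ^ 3"
proof (rule measure_le_ennreal)
  have "emeasure \<Omega> (norm_dev v) \<le> ennreal (exp (- real n / 2))"
    unfolding norm_dev_def using gaussian_sum_sq_linear_tail[of "{..<n}" "{..<K + p}" v] by simp
  also have "\<dots> \<le> ennreal (1 / real p ^ 3)"
    by (rule ennreal_leI[OF exp_half_n_le])
  finally show "emeasure \<Omega> (norm_dev v) \<le> ennreal (1 / real p ^ 3)" .
qed simp

lemma measure_noise_norm_dev:
  assumes "a < p"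
  shows "measure \<Omega> (noise_norm_dev a) \<le> 2 / real p ^ 3"
proof (rule measure_le_ennreal)
  have "emeasure \<Omega> (noise_norm_dev a) \<le> ennreal (2 * exp (- \<delta>\<^sup>2 / 16 * real n))"
    unfolding noise_norm_dev_def
    using chi_square_tail[of "{..<n}" "{..<K + p}" "K + a", OF _ _ _ \<delta>_bounds] assms by simp
  then show "emeasure \<Omega> (noise_norm_dev a) \<le> ennreal (2 / real p ^ 3)"
    by (simp only: exp_\<delta>) simp
qed simp

lemma measure_bad_at:
  assumes a: "a < p"
  shows "measure \<Omega> (bad_at a) \<le> 10 / real p ^ 2"
proof -
  interpret prob_space \<Omega> by (rule prob_space_std_gaussian_PiM)
  define S where "S = {c. c < p \<and> c \<noteq> a \<and> c \<noteq> partner a}"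
  have sets: "cross_dev a c \<in> sets \<Omega>" "latent_dev a \<in> sets \<Omega>" "noise_cross_dev a \<in> sets \<Omega>"
    "norm_dev v \<in> sets \<Omega>" "noise_norm_dev a \<in> sets \<Omega>" for c v
    unfolding cross_dev_def latent_dev_def noise_cross_dev_def norm_dev_def noise_norm_dev_def
    by measurable
  have "measure \<Omega> (\<Union>c\<in>S. cross_dev a c) \<le> (\<Sum>c\<in>S. measure \<Omega> (cross_dev a c))"
    by (rule finite_measure_subadditive_finite) (auto simp: S_def sets)
  also have "\<dots> \<le> (\<Sum>c\<in>S. 2 / real p ^ 3)"
    by (intro sum_mono measure_cross_dev) (use a in \<open>auto simp: S_def\<close>)
  also have "\<dots> \<le> real p * (2 / real p ^ 3)"
  proof -
    have "card S \<le> card {..<p}" unfolding S_def by (rule card_mono) auto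
    then show ?thesis by (simp add: divide_right_mono)
  qed
  finally have cross: "measure \<Omega> (\<Union>c\<in>S. cross_dev a c) \<le> real p * (2 / real p ^ 3)" .
  have "measure \<Omega> (bad_at a) \<le> real p * (2 / real p ^ 3) + 2 / real p ^ 3 + 2 / real p ^ 3
      + 1 / real p ^ 3 + 1 / real p ^ 3 + 2 / real p ^ 3"
    unfolding bad_at_def S_def[symmetric]
    by (intro order.trans[OF measure_Un_le] add_mono cross measure_latent_dev measure_noise_cross_dev
        measure_norm_dev measure_noise_norm_dev sets sets.Un sets.countable_UN' a)
      (auto simp: S_def sets)
  also have "\<dots> \<le> 10 / real p ^ 2"
    using p_ge_2 by (simp add: field_simps power3_eq_cube power2_eq_square)
  finally show ?thesis .
qed

lemma measure_good_event: "1 - 10 / real p \<le> measure \<Omega> good_event"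
proof -
  interpret prob_space \<Omega> by (rule prob_space_std_gaussian_PiM)
  have "measure \<Omega> (\<Union>a<p. bad_at a) \<le> (\<Sum>a<p. measure \<Omega> (bad_at a))"
    by (rule finite_measure_subadditive_finite) (auto simp: sets_bad_at)
  also have "\<dots> \<le> (\<Sum>a<p. 10 / real p ^ 2)"
    by (intro sum_mono measure_bad_at) simp
  also have "\<dots> = 10 / real p"
    using p_ge_2 by (simp add: power2_eq_square)
  finally show ?thesis
    unfolding good_event_def using prob_compl[of "\<Union>a<p. bad_at a"] sets_bad_at by auto
qed

lemma good_eventD: "\<omega> \<in> good_event \<Longrightarrow> a < p \<Longrightarrow> \<omega> \<in> space \<Omega> \<and> \<omega> \<notin> bad_at a"
  unfolding good_event_def by auto

lemma col_norm_le_on_good_event: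
  assumes "\<omega> \<in> good_event" "c < p" "Sigma_mat grp C \<gamma> c c \<le> S"
  shows "col_norm n (X \<omega>) c \<le> 2 * sqrt (real n * S)"
proof -
  have "\<omega> \<notin> norm_dev (X_coef c)" "\<omega> \<in> space \<Omega>"
    using good_eventD[OF assms(1,2)] unfolding bad_at_def by auto
  then have "(\<Sum>i<n. (X \<omega> i c)\<^sup>2) \<le> 4 * real n * Sigma_mat grp C \<gamma> c c"
    unfolding norm_dev_def by (simp add: sum_X_coef sum_X_coef_sq assms(2))
  also have "\<dots> \<le> 4 * (real n * S)"
    using assms(3) by (simp add: mult_left_mono)
  finally have "col_norm n (X \<omega>) c \<le> sqrt 4 * sqrt (real n * S)"
    unfolding col_norm_def by (metis real_sqrt_le_mono real_sqrt_mult)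
  then show ?thesis by (simp add: real_sqrt_four)
qed

lemma latent_norm_le_on_good_event:
  assumes "\<omega> \<in> good_event" "a < p" "C (grp a) (grp a) \<le> S"
  shows "sqrt (\<Sum>i<n. (latent \<omega> i (grp a))\<^sup>2) \<le> 2 * sqrt (real n * S)"
proof -
  have "\<omega> \<notin> norm_dev (latent_coef (grp a))" "\<omega> \<in> space \<Omega>"
    using good_eventD[OF assms(1,2)] unfolding bad_at_def by auto
  then have "(\<Sum>i<n. (latent \<omega> i (grp a))\<^sup>2) \<le> 4 * real n * C (grp a) (grp a)"
    unfolding norm_dev_def by (simp add: sum_latent_coef sum_latent_coef_sq grp_less assms(2))
  also have "\<dots> \<le> 4 * (real n * S)"
    using assms(3) by (simp add: mult_left_mono)
  finally have "sqrt (\<Sum>i<n. (latent \<omega> i (grp a))\<^sup>2) \<le> sqrt 4 * sqrt (real n * S)"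
    by (metis real_sqrt_le_mono real_sqrt_mult)
  then show ?thesis by (simp add: real_sqrt_four)
qed

lemma X_minus_partner:
  assumes "a < p"
  shows "X \<omega> i a - X \<omega> i (partner a) = sqrt (\<gamma> (grp a)) * (noise \<omega> i a - noise \<omega> i (partner a))"
  unfolding X_eq partner(3)[OF assms] by (simp add: algebra_simps)

text \<open>Since a and its partner lie in the same group, X a - X (partner a) is pure noise,
  independent of every other column.\<close>
lemma partner_inner_le_on_good_event:
  assumes "\<omega> \<in> good_event" "a < p" "c < p" "c \<noteq> a" "c \<noteq> partner a"
  shows "\<bar>\<Sum>i<n. (X \<omega> i a - X \<omega> i (partner a)) * X \<omega> i c\<bar>
    \<le> sqrt (2 * \<gamma> (grp a)) * thr * col_norm n (X \<omega>) c"
proof -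
  have "\<bar>\<Sum>i<n. (noise \<omega> i a - noise \<omega> i (partner a)) * X \<omega> i c\<bar> \<le> thr * sqrt (2 * (\<Sum>i<n. (X \<omega> i c)\<^sup>2))"
    using good_eventD[OF assms(1,2)] assms(3-) unfolding bad_at_def cross_dev_def by auto
  then have "sqrt (\<gamma> (grp a)) * \<bar>\<Sum>i<n. (noise \<omega> i a - noise \<omega> i (partner a)) * X \<omega> i c\<bar>
      \<le> sqrt (2 * \<gamma> (grp a)) * thr * col_norm n (X \<omega>) c"
    unfolding col_norm_def by (rule sqrt_mult_abs_le) (use \<gamma>_pos[OF grp_less[OF assms(2)]] in simp)
  then show ?thesis
    unfolding X_minus_partner[OF assms(2)] using \<gamma>_pos[OF grp_less[OF assms(2)]]
    by (simp add: sum_distrib_left[symmetric] mult.assoc abs_mult)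
qed

lemma inner_partner_eq:
  assumes "a < p"
  shows "(\<Sum>i<n. (X \<omega> i a - X \<omega> i (partner a)) * X \<omega> i a) - real n * \<gamma> (grp a)
    = sqrt (\<gamma> (grp a)) * (\<Sum>i<n. (noise \<omega> i a - noise \<omega> i (partner a)) * latent \<omega> i (grp a))
      + \<gamma> (grp a) * ((\<Sum>i<n. (noise \<omega> i a)\<^sup>2) - real n)
      - \<gamma> (grp a) * (\<Sum>i<n. noise \<omega> i (partner a) * noise \<omega> i a)"
proof -
  define g where "g = \<gamma> (grp a)"
  have g: "sqrt g * sqrt g = g"
    using \<gamma>_pos[OF grp_less[OF assms]] by (simp add: g_def)
  have pointwise: "(X \<omega> i a - X \<omega> i (partner a)) * X \<omega> i a
      = sqrt g * ((noise \<omega> i a - noise \<omega> i (partner a)) * latent \<omega> i (grp a))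
        + g * (noise \<omega> i a)\<^sup>2 - g * (noise \<omega> i (partner a) * noise \<omega> i a)" for i
  proof -
    have "(X \<omega> i a - X \<omega> i (partner a)) * X \<omega> i a
        = sqrt g * (noise \<omega> i a - noise \<omega> i (partner a)) * (latent \<omega> i (grp a) + sqrt g * noise \<omega> i a)"
      unfolding X_minus_partner[OF assms] by (simp add: X_eq g_def)
    also have "\<dots> = sqrt g * ((noise \<omega> i a - noise \<omega> i (partner a)) * latent \<omega> i (grp a))
        + (sqrt g * sqrt g) * (noise \<omega> i a)\<^sup>2 - (sqrt g * sqrt g) * (noise \<omega> i (partner a) * noise \<omega> i a)"
      by (simp add: algebra_simps power2_eq_square del: real_sqrt_mult_self)
    finally show ?thesis unfolding g .
  qed
  show ?thesis
    unfolding pointwise g_def[symmetric] by (simp add: sum.distrib sum_subtractf sum_distrib_left algebra_simps)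
qed

lemma inner_partner_error_on_good_event:
  assumes \<omega>: "\<omega> \<in> good_event" and a: "a < p" and S: "C (grp a) (grp a) \<le> S"
  shows "\<bar>(\<Sum>i<n. (X \<omega> i a - X \<omega> i (partner a)) * X \<omega> i a) - real n * \<gamma> (grp a)\<bar>
    \<le> sqrt (2 * \<gamma> (grp a)) * thr * (2 * sqrt (real n * S))
      + \<gamma> (grp a) * (real n * \<delta>) + \<gamma> (grp a) * (thr * sqrt (2 * real n))"
proof -
  define g where "g = \<gamma> (grp a)"
  have g: "0 < g" using \<gamma>_pos grp_less a by (simp add: g_def)
  have \<omega>_bad: "\<omega> \<notin> bad_at a" "\<omega> \<in> space \<Omega>"
    using good_eventD[OF \<omega> a] by auto
  have "\<bar>\<Sum>i<n. (noise \<omega> i a - noise \<omega> i (partner a)) * latent \<omega> i (grp a)\<bar>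
      \<le> thr * sqrt (2 * (\<Sum>i<n. (latent \<omega> i (grp a))\<^sup>2))"
    using \<omega>_bad unfolding bad_at_def latent_dev_def by auto
  then have "sqrt g * \<bar>\<Sum>i<n. (noise \<omega> i a - noise \<omega> i (partner a)) * latent \<omega> i (grp a)\<bar>
      \<le> sqrt (2 * g) * thr * sqrt (\<Sum>i<n. (latent \<omega> i (grp a))\<^sup>2)"
    by (rule sqrt_mult_abs_le) (use g in simp)
  also have "\<dots> \<le> sqrt (2 * g) * thr * (2 * sqrt (real n * S))"
    using latent_norm_le_on_good_event[OF \<omega> a S] thr_nonneg g by (intro mult_left_mono) auto
  finally have latent_term: "\<bar>sqrt g * (\<Sum>i<n. (noise \<omega> i a - noise \<omega> i (partner a)) * latent \<omega> i (grp a))\<bar>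
      \<le> sqrt (2 * g) * thr * (2 * sqrt (real n * S))"
    using g by (simp add: abs_mult)
  have chi: "\<bar>(\<Sum>i<n. (noise \<omega> i a)\<^sup>2) - real n\<bar> \<le> real n * \<delta>"
    using \<omega>_bad unfolding bad_at_def noise_norm_dev_def by auto
  moreover have "real n * \<delta> \<le> real n"
    using \<delta>_bounds by (simp add: mult_left_le)
  ultimately have "(\<Sum>i<n. (noise \<omega> i a)\<^sup>2) \<le> 2 * real n"
    by (simp add: abs_le_iff)
  moreover have "\<bar>\<Sum>i<n. noise \<omega> i (partner a) * noise \<omega> i a\<bar> \<le> thr * sqrt (\<Sum>i<n. (noise \<omega> i a)\<^sup>2)"
    using \<omega>_bad unfolding bad_at_def noise_cross_dev_def by auto
  ultimately have noise_cross: "\<bar>\<Sum>i<n. noise \<omega> i (partner a) * noise \<omega> i a\<bar> \<le> thr * sqrt (2 * real n)"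
    using thr_nonneg by (meson mult_left_mono order.trans real_sqrt_le_mono)
  have "\<bar>g * ((\<Sum>i<n. (noise \<omega> i a)\<^sup>2) - real n)\<bar> \<le> g * (real n * \<delta>)"
    using chi g by (simp add: abs_mult)
  moreover have "\<bar>g * (\<Sum>i<n. noise \<omega> i (partner a) * noise \<omega> i a)\<bar> \<le> g * (thr * sqrt (2 * real n))"
    using noise_cross g by (simp add: abs_mult)
  ultimately show ?thesis
    using inner_partner_eq[OF a, of \<omega>] latent_term unfolding g_def[symmetric] by (auto simp: abs_le_iff)
qed

lemma Gamma_check_error:
  assumes \<omega>: "\<omega> \<in> good_event" and ne: "is_ne n p (X \<omega>) ne" and a: "a < p"
    and S: "\<And>c. c < p \<Longrightarrow> Sigma_mat grp C \<gamma> c c \<le> S" and G: "\<gamma> (grp a) \<le> G"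
  shows "\<bar>Gamma_check n (X \<omega>) ne a - \<gamma> (grp a)\<bar> \<le> 35 * sqrt G * sqrt S * sqrt (ln (real p) / real n)"
proof -
  define a' g where "a' = partner a" and "g = \<gamma> (grp a)"
  define \<tau> where "\<tau> = sqrt (2 * g) * thr"
  have a': "a' < p" "a' \<noteq> a" using partner[OF a] by (auto simp: a'_def)
  have g: "0 < g" using \<gamma>_pos grp_less a by (simp add: g_def)
  have "0 \<le> C (grp a) (grp a)"
    using C_eq grp_less[OF a] by (simp add: sum_nonneg)
  then have S_a: "g \<le> S" "C (grp a) (grp a) \<le> S"
    using S[OF a] g by (auto simp: Sigma_mat_def g_def)
  have \<tau>: "0 \<le> \<tau>" using g thr_nonneg by (simp add: \<tau>_def)
  have col: "col_norm n (X \<omega>) c \<le> 2 * sqrt (real n * S)" if "c < p" for c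
    using col_norm_le_on_good_event[OF \<omega> that S[OF that]] .
  have "\<bar>(\<Sum>i<n. (X \<omega> i a - X \<omega> i (ne a)) * X \<omega> i a) - (\<Sum>i<n. (X \<omega> i a - X \<omega> i a') * X \<omega> i a)\<bar>
      \<le> \<tau> * (col_norm n (X \<omega>) a' + col_norm n (X \<omega>) (ne a))"
    using ne_inner_close_to_partner[OF ne a a' \<tau>] partner_inner_le_on_good_event[OF \<omega> a]
    unfolding \<tau>_def a'_def g_def by blast
  also have "\<dots> \<le> \<tau> * (4 * sqrt (real n * S))"
    using col[OF a'(1)] col[of "ne a"] ne a \<tau> unfolding is_ne_def by (intro mult_left_mono) auto
  finally have total: "\<bar>(\<Sum>i<n. (X \<omega> i a - X \<omega> i (ne a)) * X \<omega> i a) - real n * g\<bar>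
      \<le> 6 * (sqrt (2 * g) * sqrt (6 * ln (real p)) * sqrt (real n * S))
        + g * (real n * sqrt (48 * ln (real p) / real n)) + g * (sqrt (6 * ln (real p)) * sqrt (2 * real n))"
    using inner_partner_error_on_good_event[OF \<omega> a S_a(2)]
    unfolding \<tau>_def thr_def \<delta>_def a'_def g_def by (simp add: abs_le_iff)
  have "\<bar>((\<Sum>i<n. (X \<omega> i a - X \<omega> i (ne a)) * X \<omega> i a) - real n * g) / real n\<bar>
      \<le> 35 * sqrt G * sqrt S * sqrt (ln (real p) / real n)"
    by (rule deviation_bound_arith[OF _ _ g S_a(1) G[folded g_def] total]) (use n_pos ln_p_pos in auto)
  then show ?thesis
    using n_pos by (simp add: Gamma_check_def g_def diff_divide_distrib)
qed

lemma estimator_bound: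
  "\<exists>A \<in> sets (data_space n K p).
     measure (data_space n K p) A \<ge> 1 - 10 / real p \<and>
     (\<forall>\<omega>\<in>A. \<forall>ne. is_ne n p (X \<omega>) ne \<longrightarrow>
       (let D = (\<lambda>a. Gamma_check n (X \<omega>) ne a - \<gamma> (grp a));
            Dinf = mat_sup p (\<lambda>a b. if a = b then D a else 0);
            Ginf = mat_sup p (\<lambda>a b. if a = b then \<gamma> (grp a) else 0);
            Sinf = mat_sup p (Sigma_mat grp C \<gamma>)
        in diag_V p D \<le> 2 * Dinf \<and> 2 * Dinf \<le> 70 * sqrt Ginf * sqrt Sinf * sqrt (ln (real p) / real n)))"
proof (rule bexI[of _ good_event], intro conjI ballI allI impI)
  show "good_event \<in> sets (data_space n K p)"
    unfolding good_event_def data_space_def using sets_bad_at by auto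
  show "1 - 10 / real p \<le> measure (data_space n K p) good_event"
    unfolding data_space_def by (rule measure_good_event)
  fix \<omega> ne assume \<omega>: "\<omega> \<in> good_event" and ne: "is_ne n p (X \<omega>) ne"
  define D where "D a = Gamma_check n (X \<omega>) ne a - \<gamma> (grp a)" for a
  define Ginf where "Ginf = mat_sup p (\<lambda>a b. if a = b then \<gamma> (grp a) else 0)"
  define Sinf where "Sinf = mat_sup p (Sigma_mat grp C \<gamma>)"
  have p: "0 < p" using p_ge_2 by simp
  have G: "\<gamma> (grp a) \<le> Ginf" if "a < p" for a
    using abs_le_mat_sup[OF that that, of "\<lambda>a b. if a = b then \<gamma> (grp a) else 0"]
    unfolding Ginf_def by simp
  have S: "Sigma_mat grp C \<gamma> c c \<le> Sinf" if "c < p" for c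
    using abs_le_mat_sup[OF that that, of "Sigma_mat grp C \<gamma>"] unfolding Sinf_def by simp
  have "mat_sup p (\<lambda>a b. if a = b then D a else 0) \<le> 35 * sqrt Ginf * sqrt Sinf * sqrt (ln (real p) / real n)"
  proof (rule mat_sup_le[OF p])
    have "0 \<le> Ginf" "0 \<le> Sinf"
      using G[OF p] S[OF p] \<gamma>_pos[OF grp_less[OF p]] abs_le_mat_sup[OF p p, of "Sigma_mat grp C \<gamma>"]
      by (auto simp: Sinf_def)
    then show "\<bar>if a = b then D a else 0\<bar> \<le> 35 * sqrt Ginf * sqrt Sinf * sqrt (ln (real p) / real n)"
      if "a < p" "b < p" for a b
      using Gamma_check_error[OF \<omega> ne that(1) S G[OF that(1)]] ln_p_pos
      by (auto simp: D_def)
  qed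
  then show "let D = (\<lambda>a. Gamma_check n (X \<omega>) ne a - \<gamma> (grp a));
            Dinf = mat_sup p (\<lambda>a b. if a = b then D a else 0);
            Ginf = mat_sup p (\<lambda>a b. if a = b then \<gamma> (grp a) else 0);
            Sinf = mat_sup p (Sigma_mat grp C \<gamma>)
        in diag_V p D \<le> 2 * Dinf \<and> 2 * Dinf \<le> 70 * sqrt Ginf * sqrt Sinf * sqrt (ln (real p) / real n)"
    using diag_V_le_mat_sup[OF p, of D]
    unfolding Let_def D_def[symmetric, abs_def] Ginf_def[symmetric] Sinf_def[symmetric] by simp
qed

end

theorem mainTheorem19:
  "\<exists>c1>0. \<exists>c2>0. \<exists>c3>0. \<forall>(n::nat) (p::nat) (K::nat) (grp::nat \<Rightarrow> nat) (\<gamma>::nat \<Rightarrow> real)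
      (C::nat \<Rightarrow> nat \<Rightarrow> real) (L::nat \<Rightarrow> nat \<Rightarrow> real).
     0 < K \<longrightarrow>
     (\<forall>a<p. grp a < K) \<longrightarrow>
     (\<forall>k<K. 2 \<le> card {a. a < p \<and> grp a = k}) \<longrightarrow>
     (\<forall>k<K. 0 < \<gamma> k) \<longrightarrow>
     (\<forall>k<K. \<forall>l<K. C k l = (\<Sum>j<K. L k j * L l j)) \<longrightarrow>
     ln (real p) \<le> c1 * real n \<longrightarrow>
     (\<exists>A \<in> sets (data_space n K p).
        measure (data_space n K p) A \<ge> 1 - c3 / real p \<and>
        (\<forall>\<omega>\<in>A. \<forall>ne. is_ne n p (Xdat L grp \<gamma> K \<omega>) ne \<longrightarrow>
           (let X = Xdat L grp \<gamma> K \<omega>;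
                D = (\<lambda>a. Gamma_check n X ne a - \<gamma> (grp a));
                Dinf = mat_sup p (\<lambda>a b. if a = b then D a else 0);
                Ginf = mat_sup p (\<lambda>a b. if a = b then \<gamma> (grp a) else 0);
                Sinf = mat_sup p (Sigma_mat grp C \<gamma>)
            in diag_V p D \<le> 2 * Dinf \<and>
               2 * Dinf \<le> c2 * sqrt Ginf * sqrt Sinf * sqrt (ln (real p) / real n))))"
  unfolding Let_def
  apply (rule exI[of _ "1/48"], rule conjI, simp, rule exI[of _ 70], rule conjI, simp,
      rule exI[of _ 10], rule conjI, simp)
  apply (intro allI impI latent_model.estimator_bound[unfolded Let_def])
  apply unfold_locales
  apply auto
  done

end
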